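(* Let $\Gamma_1,\Gamma_2\subset SO(6)$ be the diagonal groups $\Gamma_1=\{(1,1,1,1,1,1),(-1,-1,-1,-1,-1,-1),(-1,-1,1,1,1,1),(-1,1,-1,1,1,1),(1,-1,-1,1,1,1),(-1,1,1,-1,-1,-1),(1,-1,1,-1,-1,-1),(1,1,-1,-1,-1,-1)\}$, $\Gamma_2=\{(1,1,1,1,1,1),(-1,-1,-1,-1,-1,-1),(-1,-1,1,1,1,1),(1,1,-1,-1,1,1),(1,1,1,1,-1,-1),(-1,-1,-1,-1,1,1),(-1,-1,1,1,-1,-1),(1,1,-1,-1,-1,-1)\}$. Let $M=SO(6)/\Gamma_1$ with the metric induced from a biinvariant metric on $SO(6)$, and let $\Gamma_i$ act on $M$ by left multiplication. Then $\mathcal O_1:=\Gamma_1\backslash M$ and $\mathcal O_2:=\Gamma_2\backslash M$ are isospectral; the maximal isotropy order of points in $\mathcal O_1$ is $4$ and in $\mathcal O_2$ it is $2$.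
   Context: A non-effective action of $\Gamma_i$ is replaced by the effective action of $\Gamma_i$ modulo its kernel (here the kernel is $\{\pm I_6\}$). For a good orbifold the isotropy order of a point is the order of the stabilizer in the effectively acting group; isospectral means equal Laplace spectra on functions with multiplicities, where multiplicity of $\lambda$ is $\dim E_\lambda(M)^\Gamma$. *)

theory Defs
  imports "HOL-Analysis.Analysis" "HOL-Library.Numeral_Type" "HOL-Library.Function_Algebras"
begin

type_synonym mat6 = "real^6^6"

definition SO6 :: "mat6 set" where
  "SO6 = {A. transpose A ** A = mat 1 \<and> det A = 1}"

definition diagm :: "real list \<Rightarrow> mat6" where
  "diagm xs = (\<chi> i j. if i = j then (vector xs :: real^6) $ i else 0)"

definition Gamma1 :: "mat6 set" where
  "Gamma1 = diagm ` {[1,1,1,1,1,1],[-1,-1,-1,-1,-1,-1],[-1,-1,1,1,1,1],[-1,1,-1,1,1,1],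
     [1,-1,-1,1,1,1],[-1,1,1,-1,-1,-1],[1,-1,1,-1,-1,-1],[1,1,-1,-1,-1,-1]}"

definition Gamma2 :: "mat6 set" where
  "Gamma2 = diagm ` {[1,1,1,1,1,1],[-1,-1,-1,-1,-1,-1],[-1,-1,1,1,1,1],[1,1,-1,-1,1,1],
     [1,1,1,1,-1,-1],[-1,-1,-1,-1,1,1],[-1,-1,1,1,-1,-1],[1,1,-1,-1,-1,-1]}"

definition mpow :: "mat6 \<Rightarrow> nat \<Rightarrow> mat6" where
  "mpow X k = ((\<lambda>Y. X ** Y) ^^ k) (mat 1)"

definition mexp :: "mat6 \<Rightarrow> mat6" where
  "mexp X = (\<Sum>k. (1 / (fact k :: real)) *\<^sub>R mpow X k)"

text \<open>Orthonormal basis of so(6) w.r.t. the bi-invariant metric <X,Y> = tr(X^T Y)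
  (the metric induced on SO(6) from the Euclidean/Frobenius metric on the 6x6 matrices).\<close>
definition munit :: "6 \<Rightarrow> 6 \<Rightarrow> mat6" where
  "munit i j = (\<chi> a b. if a = i \<and> b = j then 1 else 0)"

definition skewbasis :: "6 \<Rightarrow> 6 \<Rightarrow> mat6" where
  "skewbasis i j = (1 / sqrt 2) *\<^sub>R (munit i j - munit j i)"

definition pderiv :: "'a::euclidean_space \<Rightarrow> ('a \<Rightarrow> real) \<Rightarrow> 'a \<Rightarrow> real" where
  "pderiv v f x = deriv (\<lambda>t. f (x + t *\<^sub>R v)) 0"

fun iter_pderiv :: "'a::euclidean_space list \<Rightarrow> ('a \<Rightarrow> real) \<Rightarrow> 'a \<Rightarrow> real" where
  "iter_pderiv [] f = f"
| "iter_pderiv (v # vs) f = pderiv v (iter_pderiv vs f)"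

definition Cinf_on :: "'a::euclidean_space set \<Rightarrow> ('a \<Rightarrow> real) \<Rightarrow> bool" where
  "Cinf_on U f \<longleftrightarrow> open U \<and> (\<forall>vs \<in> lists Basis. continuous_on U (iter_pderiv vs f) \<and>
      (\<forall>v \<in> Basis. \<forall>x \<in> U. (\<lambda>t. iter_pderiv vs f (x + t *\<^sub>R v)) differentiable (at 0)))"

text \<open>Smooth functions on the embedded submanifold SO(6): restrictions of smooth functions
  defined on an open neighbourhood.  Functions are normalised to vanish off SO(6).\<close>
definition smooth_SO6 :: "(mat6 \<Rightarrow> real) \<Rightarrow> bool" where
  "smooth_SO6 f \<longleftrightarrow> (\<exists>U F. SO6 \<subseteq> U \<and> Cinf_on U F \<and> (\<forall>g\<in>SO6. f g = F g))
      \<and> (\<forall>x. x \<notin> SO6 \<longrightarrow> f x = 0)"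

text \<open>(Nonnegative) Laplace--Beltrami operator of the bi-invariant metric:
  Delta f (g) = - sum over an orthonormal basis X of so(6) of d^2/dt^2 f(g exp(tX)) at t = 0.\<close>
definition laplace :: "(mat6 \<Rightarrow> real) \<Rightarrow> mat6 \<Rightarrow> real" where
  "laplace f g = - (\<Sum>(i,j) \<in> {(i,j). i < j}.
       deriv (deriv (\<lambda>t. f (g ** mexp (t *\<^sub>R skewbasis i j)))) 0)"

text \<open>Functions on the orbifold Gamma \ M, M = SO(6)/Gamma1 (left cosets g Gamma1),
  Gamma acting by left multiplication: functions on SO(6) with f(a g b) = f(g).\<close>
definition invariant :: "mat6 set \<Rightarrow> (mat6 \<Rightarrow> real) \<Rightarrow> bool" where
  "invariant \<Gamma> f \<longleftrightarrow> (\<forall>a\<in>\<Gamma>. \<forall>g\<in>SO6. \<forall>b\<in>Gamma1. f (a ** g ** b) = f g)"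

definition eigenspace_orb :: "mat6 set \<Rightarrow> real \<Rightarrow> (mat6 \<Rightarrow> real) set" where
  "eigenspace_orb \<Gamma> lam = {f. smooth_SO6 f \<and> invariant \<Gamma> f \<and>
       (\<forall>g\<in>SO6. laplace f g = lam * f g)}"

definition multiplicity :: "mat6 set \<Rightarrow> real \<Rightarrow> nat" where
  "multiplicity \<Gamma> lam = vector_space.dim (\<lambda>c (f::mat6 \<Rightarrow> real) x. c * f x) (eigenspace_orb \<Gamma> lam)"

definition isospectral :: "mat6 set \<Rightarrow> mat6 set \<Rightarrow> bool" where
  "isospectral \<Gamma> \<Gamma>' \<longleftrightarrow> (\<forall>lam. multiplicity \<Gamma> lam = multiplicity \<Gamma>' lam)"

definition act_kernel :: "mat6 set \<Rightarrow> mat6 set" where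
  "act_kernel \<Gamma> = {a\<in>\<Gamma>. \<forall>g\<in>SO6. \<exists>b\<in>Gamma1. a ** g = g ** b}"

definition stab :: "mat6 set \<Rightarrow> mat6 \<Rightarrow> mat6 set" where
  "stab \<Gamma> g = {a\<in>\<Gamma>. \<exists>b\<in>Gamma1. a ** g = g ** b}"

text \<open>Isotropy order: order of the stabiliser in the effectively acting group Gamma / kernel.\<close>
definition isotropy_order :: "mat6 set \<Rightarrow> mat6 \<Rightarrow> nat" where
  "isotropy_order \<Gamma> g = card ((\<lambda>a. (\<lambda>k. a ** k) ` act_kernel \<Gamma>) ` stab \<Gamma> g)"

definition max_isotropy :: "mat6 set \<Rightarrow> nat" where
  "max_isotropy \<Gamma> = Max (isotropy_order \<Gamma> ` SO6)"

end

theory Submission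
  imports Defs
begin

text \<open>Both groups consist of diagonal sign matrices, so they lie in the abelian group \<open>D\<close> of even
  sign changes, which acts on functions on SO(6) by left translation.  A \<open>Gamma1\<close>-invariant
  function is the sum of its isotypic components for the four characters of \<open>D\<close> that are trivial
  on \<open>Gamma1\<close>, and similarly for \<open>Gamma2\<close>.  Conjugation by the even permutation matrices of
  (14)(25) and (12)(36) matches these two sets of characters, so translating each component by the
  corresponding permutation matrix (a transplantation) maps \<open>Gamma1\<close>-invariant functions to
  \<open>Gamma2\<close>-invariant ones and back.  Left translations commute with the Laplacian of a
  bi-invariant metric and with the right action of \<open>Gamma1\<close>, so this is a linear isomorphism
  between corresponding eigenspaces.

  Both actions have kernel \<open>{I, -I}\<close>.  The identity coset is fixed by all of \<open>Gamma1\<close>, giving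
  isotropy order 4 for the first orbifold.  For the second, a coset \<open>g Gamma1\<close> fixed by two of the
  pair flips of \<open>Gamma2\<close> would conjugate them into \<open>Gamma1\<close>, and comparing traces of products
  rules this out, so the order is at most 2.\<close>

lemma num6_exhaust: "(i::6) = 1 \<or> i = 2 \<or> i = 3 \<or> i = 4 \<or> i = 5 \<or> i = 6"
proof (induct i)
  case (of_int z)
  then have "z = 0 \<or> z = 1 \<or> z = 2 \<or> z = 3 \<or> z = 4 \<or> z = 5" by fastforce
  then show ?case by (elim disjE) simp_all
qed

lemma all_num6: "(\<forall>i::6. P i) \<longleftrightarrow> P 1 \<and> P 2 \<and> P 3 \<and> P 4 \<and> P 5 \<and> P 6"
  by (metis num6_exhaust)

lemma UNIV_num6: "(UNIV::6 set) = {1,2,3,4,5,6}"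
  using num6_exhaust by auto

lemma sum_UNIV_num6: "sum f (UNIV::6 set) = f 1 + f 2 + f 3 + f 4 + f 5 + f 6"
  unfolding UNIV_num6 by (simp add: add.assoc)

lemma set_eq_num6_iff:
  "(A::6 set) = B \<longleftrightarrow> (1 \<in> A \<longleftrightarrow> 1 \<in> B) \<and> (2 \<in> A \<longleftrightarrow> 2 \<in> B) \<and> (3 \<in> A \<longleftrightarrow> 3 \<in> B) \<and>
     (4 \<in> A \<longleftrightarrow> 4 \<in> B) \<and> (5 \<in> A \<longleftrightarrow> 5 \<in> B) \<and> (6 \<in> A \<longleftrightarrow> 6 \<in> B)"
  unfolding set_eq_iff all_num6[of "\<lambda>x. x \<in> A \<longleftrightarrow> x \<in> B"] ..

lemma card_num6: "card (A::6 set) = (\<Sum>i\<in>UNIV. if i \<in> A then 1 else 0)"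
  by (simp add: sum.If_cases)

section \<open>Characters of the group of sign changes\<close>

text \<open>A set \<open>A\<close> of coordinates encodes the diagonal matrix flipping the signs of the coordinates
  in \<open>A\<close> (see \<open>sign_diag\<close> below); it lies in SO(6) iff \<open>card A\<close> is even, multiplication is
  \<open>sym_diff\<close>, and the characters of this group are the maps \<open>character S\<close>.\<close>

definition even_subsets :: "6 set set" where
  "even_subsets = {A. even (card A)}"

definition character :: "6 set \<Rightarrow> 6 set \<Rightarrow> real" where
  "character S A = (-1) ^ card (S \<inter> A)"

definition char_kernel :: "6 set set \<Rightarrow> 6 set set" where
  "char_kernel K = {A \<in> even_subsets. \<forall>S\<in>K. character S A = 1}"

lemma card_sym_diff:
  assumes "finite A" "finite B"
  shows "card (sym_diff A B) + 2 * card (A \<inter> B) = card A + card B"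
proof -
  have "sym_diff A B = (A \<union> B) - (A \<inter> B)" by auto
  moreover have "card ((A \<union> B) - (A \<inter> B)) = card (A \<union> B) - card (A \<inter> B)"
    using assms by (intro card_Diff_subset) auto
  moreover have "card (A \<inter> B) \<le> card (A \<union> B)" using assms by (intro card_mono) auto
  ultimately show ?thesis using card_Un_Int[OF assms] by simp
qed

lemma even_card_sym_diff:
  "finite A \<Longrightarrow> finite B \<Longrightarrow> even (card (sym_diff A B)) \<longleftrightarrow> (even (card A) \<longleftrightarrow> even (card B))"
  using card_sym_diff[of A B] by (metis even_add even_mult_iff even_numeral)

lemma sym_diff_even_subsets: "A \<in> even_subsets \<Longrightarrow> B \<in> even_subsets \<Longrightarrow> sym_diff A B \<in> even_subsets"
  unfolding even_subsets_def using even_card_sym_diff[of A B] by simp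

lemma character_sym_diff: "character S (sym_diff A B) = character S A * character S B"
proof -
  have "S \<inter> sym_diff A B = sym_diff (S \<inter> A) (S \<inter> B)" by auto
  then show ?thesis
    using even_card_sym_diff[of "S \<inter> A" "S \<inter> B"] unfolding character_def
    by (auto simp: minus_one_power_iff)
qed

lemma character_sym_diff_left: "character (sym_diff S S') A = character S A * character S' A"
  by (metis Int_commute character_def character_sym_diff)

lemma character_empty [simp]: "character {} A = 1"
  unfolding character_def by simp

lemma character_pair:
  assumes "i \<noteq> j"
  shows "character {i, j} A = (if i \<in> A \<longleftrightarrow> j \<in> A then 1 else -1)"
proof -
  have "{i, j} \<inter> A = (if i \<in> A then {i} else {}) \<union> (if j \<in> A then {j} else {})" by auto
  then show ?thesis using assms unfolding character_def by auto
qed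

lemma character_vimage:
  assumes "bij p"
  shows "character (p -` S) A = character S (p ` A)"
proof -
  have "p ` (p -` S \<inter> A) = S \<inter> p ` A" using assms by (auto simp: bij_def surj_def)
  moreover have "inj_on p (p -` S \<inter> A)" using assms by (auto simp: bij_def inj_on_def)
  ultimately show ?thesis unfolding character_def by (metis card_image)
qed

lemma mem_even_subsets_iff:
  "A \<in> even_subsets \<longleftrightarrow> (1 \<in> A \<longleftrightarrow> (2 \<in> A \<longleftrightarrow> (3 \<in> A \<longleftrightarrow> (4 \<in> A \<longleftrightarrow> (5 \<in> A \<longleftrightarrow> 6 \<in> A)))))"
  unfolding even_subsets_def mem_Collect_eq card_num6 sum_UNIV_num6
  by (cases "1 \<in> A"; cases "2 \<in> A"; cases "3 \<in> A"; cases "4 \<in> A"; cases "5 \<in> A"; cases "6 \<in> A")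
     simp_all

lemma card_even_subsets: "card even_subsets = 32"
proof -
  let ?odd = "{A :: 6 set. odd (card A)}"
  have "bij_betw (\<lambda>A. sym_diff A {1}) even_subsets ?odd"
    by (rule bij_betw_byWitness[of _ "\<lambda>A. sym_diff A {1}"])
       (auto simp: even_subsets_def even_card_sym_diff)
  then have "card even_subsets = card ?odd" by (rule bij_betw_same_card)
  moreover have "card even_subsets + card ?odd = card (even_subsets \<union> ?odd)"
    by (rule card_Un_disjoint[symmetric]) (auto simp: even_subsets_def)
  moreover have "even_subsets \<union> ?odd = UNIV" by (auto simp: even_subsets_def)
  moreover have "card (UNIV :: 6 set set) = 64" by (simp add: card_UNIV_set)
  ultimately show ?thesis by simp
qed

lemma sum_even_subsets_sym_diff:
  assumes "B \<in> even_subsets"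
  shows "(\<Sum>A\<in>even_subsets. h (sym_diff A B)) = (\<Sum>A\<in>even_subsets. h A)"
  by (rule sum.reindex_bij_witness[of _ "\<lambda>A. sym_diff A B" "\<lambda>A. sym_diff A B"])
     (auto simp: sym_diff_even_subsets[OF _ assms])

lemma sum_character_eq_0:
  assumes "i \<in> S" "j \<notin> S"
  shows "(\<Sum>A\<in>even_subsets. character S A) = 0"
proof -
  have ij: "{i, j} \<in> even_subsets" using assms unfolding even_subsets_def by (cases "i = j") auto
  have c: "character S {i, j} = -1"
    using assms unfolding character_def by (subgoal_tac "S \<inter> {i,j} = {i}") auto
  have "(\<Sum>A\<in>even_subsets. character S A) = (\<Sum>A\<in>even_subsets. character S (sym_diff A {i,j}))"
    by (rule sum_even_subsets_sym_diff[OF ij, symmetric])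
  also have "\<dots> = - (\<Sum>A\<in>even_subsets. character S A)"
    by (simp add: character_sym_diff c sum_negf)
  finally show ?thesis by simp
qed

lemma sum_character_empty: "(\<Sum>A\<in>even_subsets. character {} A) = 32"
  by (simp add: card_even_subsets)

lemma character_pair_eq_1_iff:
  assumes "i \<noteq> j"
  shows "character {i, j} A = 1 \<longleftrightarrow> (i \<in> A \<longleftrightarrow> j \<in> A)"
  using character_pair[OF assms] by simp

definition Gamma1_chars :: "6 set set" where
  "Gamma1_chars = {{}, {4,5}, {4,6}, {5,6}}"

definition Gamma2_chars :: "6 set set" where
  "Gamma2_chars = {{}, {1,2}, {3,4}, {5,6}}"

lemma mem_char_kernel_Gamma1_iff:
  "A \<in> char_kernel Gamma1_chars \<longleftrightarrow>
     (4 \<in> A \<longleftrightarrow> 5 \<in> A) \<and> (5 \<in> A \<longleftrightarrow> 6 \<in> A) \<and> (1 \<in> A \<longleftrightarrow> (2 \<in> A \<longleftrightarrow> (3 \<in> A \<longleftrightarrow> 4 \<in> A)))"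
  unfolding char_kernel_def Gamma1_chars_def mem_even_subsets_iff
  by (simp add: character_pair_eq_1_iff) blast

lemma mem_char_kernel_Gamma2_iff:
  "A \<in> char_kernel Gamma2_chars \<longleftrightarrow> (1 \<in> A \<longleftrightarrow> 2 \<in> A) \<and> (3 \<in> A \<longleftrightarrow> 4 \<in> A) \<and> (5 \<in> A \<longleftrightarrow> 6 \<in> A)"
  unfolding char_kernel_def Gamma2_chars_def mem_even_subsets_iff
  by (simp add: character_pair_eq_1_iff) blast

section \<open>Sign and permutation matrices\<close>

lemma matrix_mul_uminus_left: "(- A) ** B = - (A ** B)" for A :: "'a::ring_1^'n^'m"
  by (simp add: matrix_matrix_mult_def vec_eq_iff sum_negf)

lemma matrix_mul_uminus_right: "A ** (- B) = - (A ** B)" for A :: "'a::ring_1^'n^'m"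
  by (simp add: matrix_matrix_mult_def vec_eq_iff sum_negf)

lemma mat1_SO6: "mat 1 \<in> SO6"
  unfolding SO6_def by simp

lemma SO6_mult: "a \<in> SO6 \<Longrightarrow> b \<in> SO6 \<Longrightarrow> a ** b \<in> SO6"
  unfolding SO6_def
  by (simp add: matrix_transpose_mul det_mul matrix_mul_assoc)
     (metis matrix_mul_assoc matrix_mul_lid)

lemma SO6_transpose_mult: "a \<in> SO6 \<Longrightarrow> transpose a ** a = mat 1"
  unfolding SO6_def by simp

lemma SO6_mult_transpose: "a \<in> SO6 \<Longrightarrow> a ** transpose a = mat 1"
  unfolding SO6_def using matrix_left_right_inverse by blast

lemma SO6_transpose: "a \<in> SO6 \<Longrightarrow> transpose a \<in> SO6"
  using SO6_mult_transpose[of a] unfolding SO6_def by (simp add: det_transpose)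

lemma SO6_mult_left_iff:
  assumes "a \<in> SO6"
  shows "a ** x \<in> SO6 \<longleftrightarrow> x \<in> SO6"
proof
  assume "a ** x \<in> SO6"
  then have "transpose a ** (a ** x) \<in> SO6" using SO6_mult SO6_transpose assms by blast
  then show "x \<in> SO6" using assms by (simp add: matrix_mul_assoc SO6_transpose_mult)
qed (rule SO6_mult[OF assms])

lemma SO6_mult_right_iff:
  assumes "b \<in> SO6"
  shows "x ** b \<in> SO6 \<longleftrightarrow> x \<in> SO6"
proof
  assume "x ** b \<in> SO6"
  then have "(x ** b) ** transpose b \<in> SO6" using SO6_mult SO6_transpose assms by blast
  then show "x \<in> SO6" using assms by (simp add: SO6_mult_transpose flip: matrix_mul_assoc)
qed (rule SO6_mult[OF _ assms])

definition sign_diag :: "6 set \<Rightarrow> mat6" where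
  "sign_diag A = (\<chi> i j. if i = j then (if i \<in> A then -1 else 1) else 0)"

lemma sign_diag_nth: "sign_diag A $ i $ j = (if i = j then (if i \<in> A then -1 else 1) else 0)"
  unfolding sign_diag_def by simp

lemma sign_diag_mult_nth: "(sign_diag A ** M) $ i $ j = (if i \<in> A then -1 else 1) * M $ i $ j"
proof -
  have "(sign_diag A ** M) $ i $ j = (\<Sum>k\<in>UNIV. (if i = k then (if i \<in> A then -1 else 1) else 0) * M $ k $ j)"
    unfolding sign_diag_def matrix_matrix_mult_def by simp
  also have "\<dots> = (\<Sum>k\<in>UNIV. (if i = k then (if i \<in> A then -1 else 1) * M $ k $ j else 0))"
    by (rule sum.cong) auto
  finally show ?thesis by simp
qed

lemma sign_diag_mult: "sign_diag A ** sign_diag B = sign_diag (sym_diff A B)"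
  by (simp add: vec_eq_iff sign_diag_mult_nth sign_diag_nth)

lemma sign_diag_inject: "sign_diag A = sign_diag B \<longleftrightarrow> A = B"
proof
  assume "sign_diag A = sign_diag B"
  then have "\<forall>i. sign_diag A $ i $ i = sign_diag B $ i $ i" by simp
  then show "A = B" by (auto simp: sign_diag_nth split: if_splits)
qed simp

lemma sign_diag_empty: "sign_diag {} = mat 1"
  unfolding sign_diag_def mat_def by (simp add: vec_eq_iff)

lemma uminus_sign_diag: "- sign_diag A = sign_diag (- A)"
  unfolding sign_diag_def by (simp add: vec_eq_iff)

lemma transpose_sign_diag: "transpose (sign_diag A) = sign_diag A"
  unfolding sign_diag_def transpose_def by (simp add: vec_eq_iff)

lemma sign_diag_SO6_iff: "sign_diag A \<in> SO6 \<longleftrightarrow> A \<in> even_subsets"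
proof -
  have "det (sign_diag A) = (\<Prod>i\<in>UNIV. if i \<in> A then -1 else 1)"
    by (subst det_diagonal) (auto simp: sign_diag_def)
  also have "\<dots> = (-1) ^ card A"
    by (simp add: prod.If_cases Int_absorb1)
  finally show ?thesis
    unfolding SO6_def even_subsets_def
    by (simp add: transpose_sign_diag sign_diag_mult sign_diag_empty minus_one_power_iff)
qed

lemma trace_sign_diag: "trace (sign_diag A) = 6 - 2 * real (card A)"
proof -
  have "trace (sign_diag A) = (\<Sum>i\<in>UNIV. if i \<in> A then -1 else 1)"
    unfolding trace_def sign_diag_def by simp
  also have "\<dots> = real (card (UNIV - A)) - real (card A)"
    by (simp add: sum.If_cases Int_absorb1 Compl_eq_Diff_UNIV)
  also have "card (UNIV - A) = 6 - card A"
    by (simp add: card_Diff_subset)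
  finally show ?thesis using card_mono[of UNIV A] by (simp add: of_nat_diff)
qed

definition perm_matrix :: "(6 \<Rightarrow> 6) \<Rightarrow> mat6" where
  "perm_matrix p = (\<chi> i j. if j = p i then 1 else 0)"

lemma perm_matrix_nth: "perm_matrix p $ i $ j = (if j = p i then 1 else 0)"
  unfolding perm_matrix_def by simp

lemma perm_matrix_mult_nth: "(perm_matrix p ** M) $ i $ j = M $ (p i) $ j"
proof -
  have "(perm_matrix p ** M) $ i $ j = (\<Sum>k\<in>UNIV. (if k = p i then 1 else 0) * M $ k $ j)"
    unfolding perm_matrix_def matrix_matrix_mult_def by simp
  also have "\<dots> = (\<Sum>k\<in>UNIV. (if k = p i then M $ k $ j else 0))"
    by (rule sum.cong) auto
  finally show ?thesis by simp
qed

lemma perm_matrix_mult: "perm_matrix p ** perm_matrix q = perm_matrix (q \<circ> p)"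
  by (simp add: vec_eq_iff perm_matrix_mult_nth perm_matrix_nth)

lemma perm_matrix_sign_diag: "perm_matrix p ** sign_diag A = sign_diag (p -` A) ** perm_matrix p"
  by (simp add: vec_eq_iff perm_matrix_mult_nth sign_diag_mult_nth sign_diag_nth perm_matrix_nth)

lemma det_perm_matrix:
  assumes "p permutes UNIV"
  shows "det (perm_matrix p) = of_int (sign p)"
proof -
  have "perm_matrix p = (\<chi> i. (mat 1 :: mat6) $ p i)"
    unfolding perm_matrix_def mat_def by (simp add: vec_eq_iff)
  then show ?thesis using assms by (simp add: det_permute_rows)
qed

lemma perm_matrix_mult_self: "(\<And>i. p (p i) = i) \<Longrightarrow> perm_matrix p ** perm_matrix p = mat 1"
  by (simp add: perm_matrix_mult vec_eq_iff perm_matrix_nth mat_def)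

lemma transpose_perm_matrix_self: "(\<And>i. p (p i) = i) \<Longrightarrow> transpose (perm_matrix p) = perm_matrix p"
  unfolding perm_matrix_def transpose_def by (simp add: vec_eq_iff)

lemma perm_matrix_SO6:
  assumes inv: "\<And>i. p (p i) = i" and "sign p = 1"
  shows "perm_matrix p \<in> SO6"
proof -
  have pp: "p \<circ> p = id" using inv by auto
  have "p permutes UNIV" by (rule bij_imp_permutes) (use o_bij[OF pp pp] in auto)
  then show ?thesis
    unfolding SO6_def using assms by (simp add: perm_matrix_mult_self transpose_perm_matrix_self det_perm_matrix)
qed

lemma conj_sign_diag_perm_matrix:
  assumes "\<And>i. p (p i) = i"
  shows "transpose (perm_matrix p) ** sign_diag A ** perm_matrix p = sign_diag (p -` A)"
proof -
  have "transpose (perm_matrix p) ** sign_diag A ** perm_matrix p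
      = sign_diag (p -` A) ** (perm_matrix p ** perm_matrix p)"
    using assms by (simp add: transpose_perm_matrix_self perm_matrix_sign_diag matrix_mul_assoc)
  then show ?thesis using assms by (simp add: perm_matrix_mult_self)
qed

definition swap_14_25 :: "6 \<Rightarrow> 6" where
  "swap_14_25 = Transposition.transpose 1 4 \<circ> Transposition.transpose 2 5"

definition swap_12_36 :: "6 \<Rightarrow> 6" where
  "swap_12_36 = Transposition.transpose 3 6 \<circ> Transposition.transpose 1 2"

lemma swap_14_25_simps [simp]:
  "swap_14_25 1 = 4" "swap_14_25 2 = 5" "swap_14_25 3 = 3" "swap_14_25 4 = 1" "swap_14_25 5 = 2" "swap_14_25 6 = 6"
  by (simp_all add: swap_14_25_def)

lemma swap_12_36_simps [simp]:
  "swap_12_36 1 = 2" "swap_12_36 2 = 1" "swap_12_36 3 = 6" "swap_12_36 4 = 4" "swap_12_36 5 = 5" "swap_12_36 6 = 3"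
  by (simp_all add: swap_12_36_def)

lemma swap_14_25_involution: "swap_14_25 (swap_14_25 i) = i"
  using num6_exhaust[of i] by auto

lemma swap_12_36_involution: "swap_12_36 (swap_12_36 i) = i"
  using num6_exhaust[of i] by auto

lemma sign_swap_14_25: "sign swap_14_25 = 1"
  unfolding swap_14_25_def by (subst sign_compose) (auto simp: sign_swap_id permutation_swap_id)

lemma sign_swap_12_36: "sign swap_12_36 = 1"
  unfolding swap_12_36_def by (subst sign_compose) (auto simp: sign_swap_id permutation_swap_id)

section \<open>The groups \<open>Gamma1\<close> and \<open>Gamma2\<close>\<close>

definition sign_list :: "6 set \<Rightarrow> real list" where
  "sign_list A = map (\<lambda>i. if i \<in> A then -1 else 1) [1,2,3,4,5,6]"

lemma diagm_sign_list: "diagm (sign_list A) = sign_diag A"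
  unfolding sign_list_def diagm_def sign_diag_def
  by (simp add: vec_eq_iff all_num6 vector_def)

definition Gamma1_reps :: "6 set set" where "Gamma1_reps = {{}, {1,2}, {1,3}, {2,3}}"
definition Gamma2_reps :: "6 set set" where "Gamma2_reps = {{}, {1,2}, {3,4}, {5,6}}"

lemma char_kernel_Gamma1_chars: "char_kernel Gamma1_chars = Gamma1_reps \<union> uminus ` Gamma1_reps"
proof -
  have "\<exists>B\<in>Gamma1_reps. A = B \<or> A = - B" if "A \<in> char_kernel Gamma1_chars" for A
    using that unfolding set_eq_num6_iff[of A] mem_char_kernel_Gamma1_iff Gamma1_reps_def
    by (cases "1 \<in> A"; cases "2 \<in> A"; cases "3 \<in> A"; cases "4 \<in> A"; cases "5 \<in> A"; cases "6 \<in> A") auto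
  moreover have "Gamma1_reps \<union> uminus ` Gamma1_reps \<subseteq> char_kernel Gamma1_chars"
    by (simp add: Gamma1_reps_def mem_char_kernel_Gamma1_iff)
  ultimately show ?thesis by blast
qed

lemma Gamma1_eq: "Gamma1 = sign_diag ` char_kernel Gamma1_chars"
proof -
  have "Gamma1 = diagm ` sign_list ` (Gamma1_reps \<union> uminus ` Gamma1_reps)"
    unfolding Gamma1_def Gamma1_reps_def by (simp add: sign_list_def) (auto)
  then show ?thesis by (simp add: image_image diagm_sign_list char_kernel_Gamma1_chars)
qed

lemma char_kernel_Gamma2_chars: "char_kernel Gamma2_chars = Gamma2_reps \<union> uminus ` Gamma2_reps"
proof -
  have "\<exists>B\<in>Gamma2_reps. A = B \<or> A = - B" if "A \<in> char_kernel Gamma2_chars" for A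
    using that unfolding set_eq_num6_iff[of A] mem_char_kernel_Gamma2_iff Gamma2_reps_def
    by (cases "1 \<in> A"; cases "2 \<in> A"; cases "3 \<in> A"; cases "4 \<in> A"; cases "5 \<in> A"; cases "6 \<in> A") auto
  moreover have "Gamma2_reps \<union> uminus ` Gamma2_reps \<subseteq> char_kernel Gamma2_chars"
    by (simp add: Gamma2_reps_def mem_char_kernel_Gamma2_iff)
  ultimately show ?thesis by blast
qed

lemma Gamma2_eq: "Gamma2 = sign_diag ` char_kernel Gamma2_chars"
proof -
  have "Gamma2 = diagm ` sign_list ` (Gamma2_reps \<union> uminus ` Gamma2_reps)"
    unfolding Gamma2_def Gamma2_reps_def by (simp add: sign_list_def) (auto)
  then show ?thesis by (simp add: image_image diagm_sign_list char_kernel_Gamma2_chars)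
qed

lemma Gamma1_pm_reps: "Gamma1 = sign_diag ` Gamma1_reps \<union> uminus ` sign_diag ` Gamma1_reps"
  by (simp add: Gamma1_eq char_kernel_Gamma1_chars image_Un image_image uminus_sign_diag)

lemma Gamma2_pm_reps: "Gamma2 = sign_diag ` Gamma2_reps \<union> uminus ` sign_diag ` Gamma2_reps"
  by (simp add: Gamma2_eq char_kernel_Gamma2_chars image_Un image_image uminus_sign_diag)

lemma sign_diag_char_kernel_SO6: "sign_diag ` char_kernel K \<subseteq> SO6"
  by (auto simp: sign_diag_SO6_iff char_kernel_def)

lemma mat1_sign_diag_char_kernel: "mat 1 \<in> sign_diag ` char_kernel K"
  by (rule image_eqI[of _ _ "{}"]) (simp_all add: sign_diag_empty char_kernel_def even_subsets_def character_def)

lemma Gamma1_SO6: "Gamma1 \<subseteq> SO6"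
  unfolding Gamma1_eq by (rule sign_diag_char_kernel_SO6)

lemma Gamma2_SO6: "Gamma2 \<subseteq> SO6"
  unfolding Gamma2_eq by (rule sign_diag_char_kernel_SO6)

lemma finite_Gamma1: "finite Gamma1"
  by (simp add: Gamma1_eq)

lemma finite_Gamma2: "finite Gamma2"
  by (simp add: Gamma2_eq)

lemma uminus_Gamma1: "a \<in> Gamma1 \<Longrightarrow> - a \<in> Gamma1"
  unfolding Gamma1_pm_reps by auto

lemma uminus_Gamma2: "a \<in> Gamma2 \<Longrightarrow> - a \<in> Gamma2"
  unfolding Gamma2_pm_reps by auto

lemma mat1_Gamma1: "mat 1 \<in> Gamma1"
  unfolding Gamma1_eq by (rule mat1_sign_diag_char_kernel)

lemma mat1_Gamma2: "mat 1 \<in> Gamma2"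
  unfolding Gamma2_eq by (rule mat1_sign_diag_char_kernel)

lemma sign_diag_12_Gamma1_Gamma2: "sign_diag {1,2} \<in> Gamma1 \<inter> Gamma2"
  unfolding Gamma1_pm_reps Gamma1_reps_def Gamma2_pm_reps Gamma2_reps_def by simp

section \<open>Isotropy orders\<close>

lemma stab_mat1: "stab \<Gamma> (mat 1) = \<Gamma> \<inter> Gamma1"
  unfolding stab_def by auto

lemma conj_stab_Gamma1:
  assumes "g \<in> SO6" "a \<in> stab \<Gamma> g"
  shows "transpose g ** a ** g \<in> Gamma1"
proof -
  obtain b where b: "b \<in> Gamma1" "a ** g = g ** b" using assms(2) unfolding stab_def by auto
  have "transpose g ** a ** g = (transpose g ** g) ** b" by (simp add: b(2) flip: matrix_mul_assoc)
  then show ?thesis using assms(1) b(1) by (simp add: SO6_transpose_mult)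
qed

lemma trace_conj_SO6:
  assumes "g \<in> SO6"
  shows "trace (transpose g ** a ** g) = trace a"
proof -
  have "trace (transpose g ** a ** g) = trace (g ** (transpose g ** a))" by (rule trace_mul_sym)
  then show ?thesis using assms by (simp add: matrix_mul_assoc SO6_mult_transpose)
qed

lemma conj_mult_SO6:
  assumes "g \<in> SO6"
  shows "(transpose g ** a ** g) ** (transpose g ** a' ** g) = transpose g ** (a ** a') ** g"
proof -
  have "(transpose g ** a ** g) ** (transpose g ** a' ** g) = transpose g ** a ** (g ** transpose g) ** a' ** g"
    by (simp add: matrix_mul_assoc)
  then show ?thesis using assms by (simp add: matrix_mul_assoc SO6_mult_transpose)
qed

lemma uminus_stab:
  assumes "\<And>a. a \<in> \<Gamma> \<Longrightarrow> - a \<in> \<Gamma>" "a \<in> stab \<Gamma> g"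
  shows "- a \<in> stab \<Gamma> g"
proof -
  obtain b where "a \<in> \<Gamma>" "b \<in> Gamma1" "a ** g = g ** b" using assms(2) unfolding stab_def by auto
  moreover have "(- a) ** g = g ** (- b)" if "a ** g = g ** b"
    using that by (simp add: matrix_mul_uminus_left matrix_mul_uminus_right)
  ultimately show ?thesis unfolding stab_def using assms(1) uminus_Gamma1 by blast
qed

text \<open>An element of the kernel is conjugated into \<open>Gamma1\<close> by every \<open>g \<in> SO6\<close>; conjugating by
  suitable permutation matrices leaves only \<open>mat 1\<close> and \<open>- mat 1\<close>.\<close>

lemma act_kernel_eq_pm_mat1:
  assumes \<Gamma>: "\<Gamma> = sign_diag ` char_kernel K" and UNIV: "UNIV \<in> char_kernel K"
    and Ps: "\<And>p i. p \<in> Ps \<Longrightarrow> p (p i) = i" "\<And>p. p \<in> Ps \<Longrightarrow> sign p = 1"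
    and detect: "\<And>A. A \<in> char_kernel K \<Longrightarrow> (\<And>p. p \<in> Ps \<Longrightarrow> p -` A \<in> char_kernel Gamma1_chars)
      \<Longrightarrow> A = {} \<or> A = UNIV"
  shows "act_kernel \<Gamma> = {mat 1, - mat 1}"
proof
  have pm1: "mat 1 = sign_diag {}" "- mat 1 = sign_diag UNIV"
    using uminus_sign_diag[of "{}"] by (simp_all add: sign_diag_empty)
  show "act_kernel \<Gamma> \<subseteq> {mat 1, - mat 1}"
  proof
    fix a assume a: "a \<in> act_kernel \<Gamma>"
    then obtain A where A: "A \<in> char_kernel K" "a = sign_diag A"
      unfolding act_kernel_def \<Gamma> by auto
    have "p -` A \<in> char_kernel Gamma1_chars" if p: "p \<in> Ps" for p
    proof -
      note P = perm_matrix_SO6[OF Ps[OF p]]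
      have "a \<in> stab \<Gamma> (perm_matrix p)" using a P unfolding act_kernel_def stab_def by auto
      then have "transpose (perm_matrix p) ** a ** perm_matrix p \<in> Gamma1"
        by (rule conj_stab_Gamma1[OF P])
      then show ?thesis
        unfolding A(2) conj_sign_diag_perm_matrix[OF Ps(1)[OF p]] by (auto simp: Gamma1_eq sign_diag_inject)
    qed
    then show "a \<in> {mat 1, - mat 1}" using detect[OF A(1)] A(2) pm1 by auto
  qed
  have "{} \<in> char_kernel K" by (simp add: char_kernel_def even_subsets_def character_def)
  then have "sign_diag {} \<in> \<Gamma>" "sign_diag UNIV \<in> \<Gamma>" using UNIV unfolding \<Gamma> by auto
  then have "mat 1 \<in> \<Gamma>" "- mat 1 \<in> \<Gamma>" by (simp_all add: pm1(1) uminus_sign_diag)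
  moreover have "- mat 1 \<in> Gamma1" using uminus_Gamma1[OF mat1_Gamma1] .
  ultimately have "k \<in> \<Gamma> \<and> k \<in> Gamma1 \<and> (\<forall>g. k ** g = g ** k)" if "k \<in> {mat 1, - mat 1}" for k
    using that mat1_Gamma1 by (auto simp: matrix_mul_uminus_left matrix_mul_uminus_right)
  then show "{mat 1, - mat 1} \<subseteq> act_kernel \<Gamma>"
    unfolding act_kernel_def by blast
qed

lemma act_kernel_Gamma1: "act_kernel Gamma1 = {mat 1, - mat 1}"
proof (rule act_kernel_eq_pm_mat1[OF Gamma1_eq, where Ps = "{swap_14_25}"])
  fix A assume "A \<in> char_kernel Gamma1_chars" "\<And>p. p \<in> {swap_14_25} \<Longrightarrow> p -` A \<in> char_kernel Gamma1_chars"
  then have "A \<in> char_kernel Gamma1_chars" "swap_14_25 -` A \<in> char_kernel Gamma1_chars" by auto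
  then show "A = {} \<or> A = UNIV"
    unfolding mem_char_kernel_Gamma1_iff vimage_eq set_eq_num6_iff[of A]
    by (cases "1 \<in> A"; cases "2 \<in> A"; cases "3 \<in> A"; cases "4 \<in> A"; cases "5 \<in> A"; cases "6 \<in> A")
      simp_all
qed (simp_all add: mem_char_kernel_Gamma1_iff swap_14_25_involution sign_swap_14_25)

lemma act_kernel_Gamma2: "act_kernel Gamma2 = {mat 1, - mat 1}"
proof (rule act_kernel_eq_pm_mat1[OF Gamma2_eq, where Ps = "{swap_14_25, swap_12_36}"])
  fix A assume "A \<in> char_kernel Gamma2_chars"
    "\<And>p. p \<in> {swap_14_25, swap_12_36} \<Longrightarrow> p -` A \<in> char_kernel Gamma1_chars"
  then have "A \<in> char_kernel Gamma2_chars" "swap_14_25 -` A \<in> char_kernel Gamma1_chars"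
    "swap_12_36 -` A \<in> char_kernel Gamma1_chars" by auto
  then show "A = {} \<or> A = UNIV"
    unfolding mem_char_kernel_Gamma1_iff mem_char_kernel_Gamma2_iff vimage_eq set_eq_num6_iff[of A]
    by (cases "1 \<in> A"; cases "2 \<in> A"; cases "3 \<in> A"; cases "4 \<in> A"; cases "5 \<in> A"; cases "6 \<in> A")
      simp_all
qed (auto simp: mem_char_kernel_Gamma2_iff swap_14_25_involution sign_swap_14_25
       swap_12_36_involution sign_swap_12_36)

lemma isotropy_order_eq_card_pairs:
  assumes "act_kernel \<Gamma> = {mat 1, - mat 1}"
  shows "isotropy_order \<Gamma> g = card ((\<lambda>a. {a, - a}) ` stab \<Gamma> g)"
  unfolding isotropy_order_def assms by (simp add: matrix_mul_uminus_right)

lemma isotropy_order_le: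
  assumes "act_kernel \<Gamma> = {mat 1, - mat 1}" "stab \<Gamma> g \<subseteq> R \<union> uminus ` R" "finite R"
  shows "isotropy_order \<Gamma> g \<le> card R"
proof -
  have "(\<lambda>a. {a, - a}) ` stab \<Gamma> g \<subseteq> (\<lambda>a. {a, - a}) ` R"
    using assms(2) by (force simp: insert_commute)
  then have "card ((\<lambda>a. {a, - a}) ` stab \<Gamma> g) \<le> card ((\<lambda>a. {a, - a}) ` R)"
    by (intro card_mono) (simp_all add: assms(3))
  also have "\<dots> \<le> card R" by (rule card_image_le[OF assms(3)])
  finally show ?thesis by (simp add: isotropy_order_eq_card_pairs[OF assms(1)])
qed

lemma card_le_isotropy_order:
  assumes "act_kernel \<Gamma> = {mat 1, - mat 1}" "R \<subseteq> stab \<Gamma> g" "inj_on (\<lambda>a. {a, - a}) R" "finite \<Gamma>"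
  shows "card R \<le> isotropy_order \<Gamma> g"
proof -
  have "finite (stab \<Gamma> g)" using assms(4) unfolding stab_def by simp
  then have "card ((\<lambda>a. {a, - a}) ` R) \<le> card ((\<lambda>a. {a, - a}) ` stab \<Gamma> g)"
    using assms(2) by (intro card_mono) auto
  then show ?thesis by (simp add: card_image[OF assms(3)] isotropy_order_eq_card_pairs[OF assms(1)])
qed

lemma max_isotropy_eqI:
  assumes "\<And>g. g \<in> SO6 \<Longrightarrow> isotropy_order \<Gamma> g \<le> n" "n \<le> isotropy_order \<Gamma> (mat 1)"
  shows "max_isotropy \<Gamma> = n"
  unfolding max_isotropy_def
proof (rule Max_eqI)
  show "finite (isotropy_order \<Gamma> ` SO6)"
    by (rule finite_subset[of _ "{..n}"]) (auto simp: assms(1))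
  show "n \<in> isotropy_order \<Gamma> ` SO6"
    using assms mat1_SO6 by (intro image_eqI[of _ _ "mat 1"]) (auto intro: antisym)
qed (use assms(1) in auto)

lemma inj_on_pairs_sign_diag:
  assumes "\<And>B B'. B \<in> Bs \<Longrightarrow> B' \<in> Bs \<Longrightarrow> B \<noteq> - B'"
  shows "inj_on (\<lambda>a. {a, - a}) (sign_diag ` Bs)"
  using assms by (auto simp: inj_on_def doubleton_eq_iff uminus_sign_diag sign_diag_inject)

lemma max_isotropy_Gamma1: "max_isotropy Gamma1 = 4"
proof (rule max_isotropy_eqI)
  have card: "card (sign_diag ` Gamma1_reps) = 4"
    by (subst card_image) (auto simp: inj_on_def sign_diag_inject Gamma1_reps_def doubleton_eq_iff)
  show "isotropy_order Gamma1 g \<le> 4" for g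
    using isotropy_order_le[OF act_kernel_Gamma1, of g "sign_diag ` Gamma1_reps"]
    unfolding stab_def card Gamma1_pm_reps by auto
  have inj: "inj_on (\<lambda>a. {a, - a}) (sign_diag ` Gamma1_reps)"
    by (rule inj_on_pairs_sign_diag) (auto simp: Gamma1_reps_def set_eq_num6_iff)
  have "sign_diag ` Gamma1_reps \<subseteq> stab Gamma1 (mat 1)"
    unfolding stab_mat1 Gamma1_pm_reps by auto
  from card_le_isotropy_order[OF act_kernel_Gamma1 this inj finite_Gamma1]
  show "4 \<le> isotropy_order Gamma1 (mat 1)" by (simp only: card)
qed

lemma card_conj_sign_diag:
  assumes "g \<in> SO6" "transpose g ** sign_diag B ** g = sign_diag C"
  shows "card C = card B"
  using trace_conj_SO6[OF assms(1), of "sign_diag B"] assms(2) by (simp add: trace_sign_diag)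

lemma char_kernel_Gamma1_card2:
  assumes C: "C \<in> char_kernel Gamma1_chars" "card C = 2"
  shows "C \<subseteq> {1,2,3}"
proof -
  have "4 \<notin> C"
  proof
    assume "4 \<in> C"
    then have "{4,5,6} \<subseteq> C" using C(1) by (auto simp: mem_char_kernel_Gamma1_iff)
    then have "card {4,5,6::6} \<le> card C" by (intro card_mono) auto
    then show False using C(2) by simp
  qed
  then show ?thesis using C(1) num6_exhaust unfolding mem_char_kernel_Gamma1_iff by blast
qed

text \<open>The trace argument: two distinct pair flips of \<open>Gamma2\<close> multiply to an element of trace \<open>-2\<close>,
  whereas the product of two elements of trace \<open>2\<close> in \<open>Gamma1\<close> has trace \<open>2\<close> or \<open>6\<close>.\<close>

lemma pair_flips_stab_Gamma2_unique:
  assumes g: "g \<in> SO6" and B: "B \<in> Gamma2_reps - {{}}" "B' \<in> Gamma2_reps - {{}}"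
    and stab: "sign_diag B \<in> stab Gamma2 g" "sign_diag B' \<in> stab Gamma2 g"
  shows "B = B'"
proof (rule ccontr)
  assume ne: "B \<noteq> B'"
  have conj: "\<exists>C. transpose g ** sign_diag A ** g = sign_diag C \<and> C \<in> char_kernel Gamma1_chars"
    if "sign_diag A \<in> stab Gamma2 g" for A
    using conj_stab_Gamma1[OF g that] by (auto simp: Gamma1_eq)
  obtain C C' where C: "transpose g ** sign_diag B ** g = sign_diag C" "C \<in> char_kernel Gamma1_chars"
    and C': "transpose g ** sign_diag B' ** g = sign_diag C'" "C' \<in> char_kernel Gamma1_chars"
    using conj[OF stab(1)] conj[OF stab(2)] by blast
  have "card B = 2" "card B' = 2" "card (sym_diff B B') = 4"
    using B ne by (auto simp: Gamma2_reps_def)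
  then have "C \<subseteq> {1,2,3}" "C' \<subseteq> {1,2,3}"
    using C C' card_conj_sign_diag[OF g] char_kernel_Gamma1_card2 by metis+
  then have "card (sym_diff C C') \<le> card {1,2,3::6}" by (intro card_mono) auto
  moreover have "transpose g ** sign_diag (sym_diff B B') ** g = sign_diag (sym_diff C C')"
    using conj_mult_SO6[OF g, of "sign_diag B" "sign_diag B'"] C(1) C'(1) by (simp add: sign_diag_mult)
  then have "card (sym_diff C C') = 4"
    using card_conj_sign_diag[OF g] \<open>card (sym_diff B B') = 4\<close> by metis
  ultimately show False by simp
qed

lemma isotropy_order_Gamma2_le:
  assumes g: "g \<in> SO6"
  shows "isotropy_order Gamma2 g \<le> 2"
proof -
  define F where "F = {B \<in> Gamma2_reps - {{}}. sign_diag B \<in> stab Gamma2 g}"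
  define R where "R = insert (mat 1) (sign_diag ` F)"
  have "finite F" unfolding F_def by simp
  have "\<forall>B\<in>F. \<forall>B'\<in>F. B = B'"
    unfolding F_def using pair_flips_stab_Gamma2_unique[OF g] by blast
  then have "card F \<le> 1" using card_le_Suc0_iff_eq[OF \<open>finite F\<close>] by simp
  have "card R \<le> Suc (card (sign_diag ` F))"
    unfolding R_def using \<open>finite F\<close> by (simp add: card_insert_if)
  also have "\<dots> \<le> Suc (card F)" using card_image_le[OF \<open>finite F\<close>] by simp
  finally have "card R \<le> 2" using \<open>card F \<le> 1\<close> by simp
  have "stab Gamma2 g \<subseteq> R \<union> uminus ` R"
  proof
    fix a assume a: "a \<in> stab Gamma2 g"
    then have "a \<in> Gamma2" unfolding stab_def by auto
    then obtain B where B: "B \<in> Gamma2_reps" "a = sign_diag B \<or> a = - sign_diag B"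
      unfolding Gamma2_pm_reps by auto
    show "a \<in> R \<union> uminus ` R"
    proof (cases "B = {}")
      case True
      then show ?thesis using B(2) by (auto simp: R_def sign_diag_empty)
    next
      case False
      have "sign_diag B \<in> stab Gamma2 g" using B(2) a uminus_stab[OF uminus_Gamma2 a] by auto
      then have "B \<in> F" using B(1) False by (simp add: F_def)
      then show ?thesis using B(2) by (auto simp: R_def)
    qed
  qed
  then have "isotropy_order Gamma2 g \<le> card R"
    by (rule isotropy_order_le[OF act_kernel_Gamma2]) (simp add: R_def \<open>finite F\<close>)
  with \<open>card R \<le> 2\<close> show ?thesis by simp
qed

lemma max_isotropy_Gamma2: "max_isotropy Gamma2 = 2"
proof (rule max_isotropy_eqI[OF isotropy_order_Gamma2_le])
  have R: "{mat 1, sign_diag {1,2}} = sign_diag ` {{}, {1,2}}"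
    by (simp add: sign_diag_empty)
  have card: "card {mat 1, sign_diag {1,2}} = 2"
    unfolding R by (subst card_image) (auto simp: inj_on_def sign_diag_inject)
  have inj: "inj_on (\<lambda>a. {a, - a}) {mat 1, sign_diag {1,2}}"
    unfolding R by (rule inj_on_pairs_sign_diag) (auto simp: set_eq_num6_iff)
  have "{mat 1, sign_diag {1,2}} \<subseteq> stab Gamma2 (mat 1)"
    unfolding stab_mat1 using mat1_Gamma1 mat1_Gamma2 sign_diag_12_Gamma1_Gamma2 by auto
  from card_le_isotropy_order[OF act_kernel_Gamma2 this inj finite_Gamma2]
  show "2 \<le> isotropy_order Gamma2 (mat 1)" by (simp only: card)
qed

section \<open>Smooth functions\<close>

lemma Cinf_on_open: "Cinf_on U F \<Longrightarrow> open U"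
  unfolding Cinf_on_def by simp

lemma Cinf_on_continuous_pderiv: "Cinf_on U F \<Longrightarrow> v \<in> Basis \<Longrightarrow> continuous_on U (pderiv v F)"
  unfolding Cinf_on_def by (metis iter_pderiv.simps lists.Cons lists.Nil)

lemma Cinf_on_pderiv:
  assumes "Cinf_on U F" "v \<in> Basis"
  shows "Cinf_on U (pderiv v F)"
proof -
  have "iter_pderiv vs (pderiv v F) = iter_pderiv (vs @ [v]) F" for vs
    by (induction vs) auto
  then show ?thesis using assms unfolding Cinf_on_def by auto
qed

lemma Cinf_on_has_real_derivative_iter_pderiv:
  "Cinf_on U F \<Longrightarrow> vs \<in> lists Basis \<Longrightarrow> v \<in> Basis \<Longrightarrow> y \<in> U \<Longrightarrow>
    ((\<lambda>t. iter_pderiv vs F (y + t *\<^sub>R v)) has_real_derivative iter_pderiv (v # vs) F y) (at 0)"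
  unfolding Cinf_on_def by (simp add: pderiv_def DERIV_deriv_iff_real_differentiable)

lemma Cinf_on_has_real_derivative_line:
  assumes "Cinf_on U F" "v \<in> Basis" "y + t0 *\<^sub>R v \<in> U"
  shows "((\<lambda>t. F (y + t *\<^sub>R v)) has_real_derivative pderiv v F (y + t0 *\<^sub>R v)) (at t0)"
proof -
  have "((\<lambda>s. F ((y + t0 *\<^sub>R v) + s *\<^sub>R v)) has_real_derivative pderiv v F (y + t0 *\<^sub>R v)) (at (t0 + - t0))"
    using Cinf_on_has_real_derivative_iter_pderiv[OF assms(1) lists.Nil assms(2,3)] by simp
  from DERIV_shift[THEN iffD1, OF this] show ?thesis
    by (simp add: algebra_simps)
qed

lemma mean_value_pderiv:
  assumes F: "Cinf_on U F" and b: "b \<in> Basis" and seg: "\<And>t. \<bar>t\<bar> \<le> \<bar>s\<bar> \<Longrightarrow> y + t *\<^sub>R b \<in> U"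
  obtains \<theta> where "\<bar>\<theta>\<bar> \<le> \<bar>s\<bar>" "F (y + s *\<^sub>R b) - F y = s * pderiv b F (y + \<theta> *\<^sub>R b)"
proof -
  let ?G = "\<lambda>t. F (y + t *\<^sub>R b)" and ?G' = "\<lambda>t. pderiv b F (y + t *\<^sub>R b)"
  have D: "\<And>t. \<bar>t\<bar> \<le> \<bar>s\<bar> \<Longrightarrow> (?G has_real_derivative ?G' t) (at t)"
    using Cinf_on_has_real_derivative_line[OF F b seg] by blast
  consider "s = 0" | "s > 0" | "s < 0" by linarith
  then show ?thesis
  proof cases
    case 1
    then show ?thesis using that[of 0] by simp
  next
    case 2
    then obtain z where "0 < z" "z < s" "?G s - ?G 0 = (s - 0) * ?G' z"
      using MVT2[of 0 s ?G ?G'] D by force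
    then show ?thesis using that[of z] by simp
  next
    case 3
    then obtain z where "s < z" "z < 0" "?G 0 - ?G s = (0 - s) * ?G' z"
      using MVT2[of s 0 ?G ?G'] D by force
    then show ?thesis using that[of z] by (simp add: algebra_simps)
  qed
qed

lemma pderiv_increment_estimate:
  assumes F: "Cinf_on U F" and x: "x \<in> U" and b: "b \<in> Basis" and e: "e > 0"
  obtains d where "d > 0"
    "\<And>y s. norm (y - x) < d \<Longrightarrow> \<bar>s\<bar> < d \<Longrightarrow> \<bar>F (y + s *\<^sub>R b) - F y - s * pderiv b F x\<bar> \<le> e * \<bar>s\<bar>"
proof -
  obtain r where r: "r > 0" "ball x r \<subseteq> U" using Cinf_on_open[OF F] x open_contains_ball by blast
  have "isCont (pderiv b F) x"
    using Cinf_on_continuous_pderiv[OF F b] Cinf_on_open[OF F] x continuous_on_eq_continuous_at by blast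
  then obtain d' where d': "d' > 0" "\<And>z. dist z x < d' \<Longrightarrow> dist (pderiv b F z) (pderiv b F x) < e"
    using e unfolding continuous_at_eps_delta by blast
  define d where "d = min r d' / 2"
  have "d > 0" using r d' by (simp add: d_def)
  moreover have "\<bar>F (y + s *\<^sub>R b) - F y - s * pderiv b F x\<bar> \<le> e * \<bar>s\<bar>"
    if y: "norm (y - x) < d" and s: "\<bar>s\<bar> < d" for y s
  proof -
    have close: "dist (y + t *\<^sub>R b) x < min r d'" if "\<bar>t\<bar> \<le> \<bar>s\<bar>" for t
    proof -
      have "dist (y + t *\<^sub>R b) x \<le> norm (y - x) + \<bar>t\<bar>"
        using norm_triangle_ineq[of "y - x" "t *\<^sub>R b"] b by (simp add: dist_norm algebra_simps)
      then show ?thesis using that y s unfolding d_def by linarith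
    qed
    obtain \<theta> where \<theta>: "\<bar>\<theta>\<bar> \<le> \<bar>s\<bar>" "F (y + s *\<^sub>R b) - F y = s * pderiv b F (y + \<theta> *\<^sub>R b)"
      by (rule mean_value_pderiv[OF F b, of s y]) (use close r(2) in \<open>auto simp: dist_commute\<close>)
    have "\<bar>pderiv b F (y + \<theta> *\<^sub>R b) - pderiv b F x\<bar> \<le> e"
      using d'(2)[of "y + \<theta> *\<^sub>R b"] close[OF \<theta>(1)] by (simp add: dist_real_def)
    then have "\<bar>s\<bar> * \<bar>pderiv b F (y + \<theta> *\<^sub>R b) - pderiv b F x\<bar> \<le> \<bar>s\<bar> * e"
      by (rule mult_left_mono) simp
    moreover have "F (y + s *\<^sub>R b) - F y - s * pderiv b F x = s * (pderiv b F (y + \<theta> *\<^sub>R b) - pderiv b F x)"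
      using \<theta>(2) by (simp add: algebra_simps)
    ultimately show ?thesis by (simp add: abs_mult mult.commute)
  qed
  ultimately show ?thesis using that by blast
qed

lemma partial_sum_estimate_insert:
  fixes F :: "'a::euclidean_space \<Rightarrow> real"
  assumes b: "b \<in> Basis" "b \<notin> S" and S: "finite S" "S \<subseteq> Basis" and e: "e \<ge> 0"
    and IH: "\<bar>F (x + (\<Sum>b\<in>S. (h \<bullet> b) *\<^sub>R b)) - F x - (\<Sum>b\<in>S. (h \<bullet> b) * pderiv b F x)\<bar> \<le> e / 2 * norm h"
    and step: "\<And>y s. norm (y - x) < d \<Longrightarrow> \<bar>s\<bar> < d \<Longrightarrow>
      \<bar>F (y + s *\<^sub>R b) - F y - s * pderiv b F x\<bar> \<le> e / 2 * \<bar>s\<bar>"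
    and h: "(card S + 1) * norm h < d"
  shows "\<bar>F (x + (\<Sum>b\<in>insert b S. (h \<bullet> b) *\<^sub>R b)) - F x - (\<Sum>b\<in>insert b S. (h \<bullet> b) * pderiv b F x)\<bar>
    \<le> e * norm h"
proof -
  define y where "y = x + (\<Sum>b\<in>S. (h \<bullet> b) *\<^sub>R b)"
  have "norm (y - x) \<le> (\<Sum>b\<in>S. norm ((h \<bullet> b) *\<^sub>R b))" unfolding y_def by (simp only: add_diff_cancel_left' norm_sum)
  also have "\<dots> \<le> (\<Sum>b\<in>S. norm h)" using S(2) by (intro sum_mono) (auto simp: Basis_le_norm)
  also have "\<dots> \<le> (card S + 1) * norm h" by (simp add: algebra_simps)
  finally have y: "norm (y - x) < d" using h by linarith
  have hb: "\<bar>h \<bullet> b\<bar> \<le> norm h" using b(1) by (rule Basis_le_norm)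
  moreover have "norm h \<le> (card S + 1) * norm h" by (simp add: algebra_simps)
  ultimately have "\<bar>h \<bullet> b\<bar> < d" using h by linarith
  define A where "A = F (y + (h \<bullet> b) *\<^sub>R b) - F y - (h \<bullet> b) * pderiv b F x"
  define B where "B = F y - F x - (\<Sum>b\<in>S. (h \<bullet> b) * pderiv b F x)"
  have "\<bar>A\<bar> \<le> e / 2 * \<bar>h \<bullet> b\<bar>" unfolding A_def using step[OF y \<open>\<bar>h \<bullet> b\<bar> < d\<close>] .
  also have "\<dots> \<le> e / 2 * norm h" using hb e by (intro mult_left_mono) simp_all
  finally have A: "\<bar>A\<bar> \<le> e / 2 * norm h" .
  have B: "\<bar>B\<bar> \<le> e / 2 * norm h" using IH unfolding B_def y_def .
  have eq: "x + (\<Sum>b\<in>insert b S. (h \<bullet> b) *\<^sub>R b) = y + (h \<bullet> b) *\<^sub>R b"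
    using b S unfolding y_def by (simp add: add_ac)
  have "F (x + (\<Sum>b\<in>insert b S. (h \<bullet> b) *\<^sub>R b)) - F x - (\<Sum>b\<in>insert b S. (h \<bullet> b) * pderiv b F x) = A + B"
    using b S unfolding eq A_def B_def by simp
  then show ?thesis using abs_triangle_ineq[of A B] A B by linarith
qed

lemma Cinf_on_partial_sum_estimate:
  fixes F :: "'a::euclidean_space \<Rightarrow> real"
  assumes F: "Cinf_on U F" and x: "x \<in> U" and S: "S \<subseteq> Basis" and e: "e > 0"
  shows "\<exists>d>0. \<forall>h. norm h < d \<longrightarrow>
     \<bar>F (x + (\<Sum>b\<in>S. (h \<bullet> b) *\<^sub>R b)) - F x - (\<Sum>b\<in>S. (h \<bullet> b) * pderiv b F x)\<bar> \<le> e * norm h"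
proof -
  have "finite S" using S finite_Basis finite_subset by blast
  from this S e show ?thesis
  proof (induction S arbitrary: e rule: finite_induct)
    case empty
    then show ?case by (auto intro: exI[of _ 1])
  next
    case (insert b S)
    have b: "b \<in> Basis" and SB: "S \<subseteq> Basis" and e2: "e / 2 > 0" using insert.prems by auto
    obtain d1 where d1: "d1 > 0" "\<And>h. norm h < d1 \<Longrightarrow>
        \<bar>F (x + (\<Sum>b\<in>S. (h \<bullet> b) *\<^sub>R b)) - F x - (\<Sum>b\<in>S. (h \<bullet> b) * pderiv b F x)\<bar> \<le> e / 2 * norm h"
      using insert.IH[OF SB e2] by blast
    obtain d2 where d2: "d2 > 0" "\<And>y s. norm (y - x) < d2 \<Longrightarrow> \<bar>s\<bar> < d2 \<Longrightarrow>
        \<bar>F (y + s *\<^sub>R b) - F y - s * pderiv b F x\<bar> \<le> e / 2 * \<bar>s\<bar>"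
      using pderiv_increment_estimate[OF F x b e2] by blast
    define d where "d = min d1 (d2 / (card S + 1))"
    have "d > 0" using d1 d2 by (simp add: d_def)
    moreover have "\<bar>F (x + (\<Sum>b\<in>insert b S. (h \<bullet> b) *\<^sub>R b)) - F x
        - (\<Sum>b\<in>insert b S. (h \<bullet> b) * pderiv b F x)\<bar> \<le> e * norm h" if "norm h < d" for h
    proof (rule partial_sum_estimate_insert[OF b insert.hyps(2,1) SB _ d1(2) d2(2)])
      show "(card S + 1) * norm h < d2" "norm h < d1"
        using that unfolding d_def by (simp_all add: field_simps)
    qed (use insert.prems in auto)
    ultimately show ?case by blast
  qed
qed

lemma Cinf_on_has_derivative:
  fixes F :: "'a::euclidean_space \<Rightarrow> real"
  assumes F: "Cinf_on U F" and x: "x \<in> U"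
  shows "(F has_derivative (\<lambda>h. \<Sum>b\<in>Basis. (h \<bullet> b) * pderiv b F x)) (at x)"
  unfolding has_derivative_at_alt
proof (intro conjI allI impI)
  show "bounded_linear (\<lambda>h. \<Sum>b\<in>Basis. (h \<bullet> b) * pderiv b F x)"
    by (intro bounded_linear_sum bounded_linear_mult_const bounded_linear_inner_left)
  fix e :: real assume "e > 0"
  then obtain d where d: "d > 0" "\<forall>h. norm h < d \<longrightarrow>
      \<bar>F (x + h) - F x - (\<Sum>b\<in>Basis. (h \<bullet> b) * pderiv b F x)\<bar> \<le> e * norm h"
    using Cinf_on_partial_sum_estimate[OF F x order_refl] unfolding euclidean_representation by blast
  show "\<exists>d>0. \<forall>y. norm (y - x) < d \<longrightarrow>
      norm (F y - F x - (\<Sum>b\<in>Basis. ((y - x) \<bullet> b) * pderiv b F x)) \<le> e * norm (y - x)"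
  proof (intro exI[of _ d] conjI allI impI d(1))
    fix y assume "norm (y - x) < d"
    then show "norm (F y - F x - (\<Sum>b\<in>Basis. ((y - x) \<bullet> b) * pderiv b F x)) \<le> e * norm (y - x)"
      using d(2)[rule_format, of "y - x"] by simp
  qed
qed

lemma line_derivative_cong_open:
  fixes x v :: "'a::real_normed_vector" and H K :: "'a \<Rightarrow> real"
  assumes "open S" "x \<in> S" "((\<lambda>t. K (x + t *\<^sub>R v)) has_real_derivative D) (at 0)"
    and "\<And>y. y \<in> S \<Longrightarrow> H y = K y"
  shows "((\<lambda>t. H (x + t *\<^sub>R v)) has_real_derivative D) (at 0)"
proof -
  have "open ((\<lambda>t::real. x + t *\<^sub>R v) -` S)"
    by (rule continuous_open_vimage[OF assms(1)]) (intro continuous_intros)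
  moreover have "0 \<in> (\<lambda>t::real. x + t *\<^sub>R v) -` S" using assms(2) by simp
  ultimately have "eventually (\<lambda>t. H (x + t *\<^sub>R v) = K (x + t *\<^sub>R v)) (nhds 0)"
    unfolding eventually_nhds using assms(4) by blast
  from DERIV_cong_ev[OF refl this refl] show ?thesis using assms(3) by simp
qed

lemma pderiv_eqI: "((\<lambda>t. H (x + t *\<^sub>R v)) has_real_derivative D) (at 0) \<Longrightarrow> pderiv v H x = D"
  unfolding pderiv_def by (rule DERIV_imp_deriv)

lemma iter_pderiv_lincomb:
  fixes F G :: "'a::euclidean_space \<Rightarrow> real"
  assumes F: "Cinf_on U F" and G: "Cinf_on V G" and vs: "vs \<in> lists Basis" and y: "y \<in> U \<inter> V"
  shows "iter_pderiv vs (\<lambda>x. a * F x + b * G x) y = a * iter_pderiv vs F y + b * iter_pderiv vs G y"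
  using vs y
proof (induction vs arbitrary: y)
  case (Cons v vs)
  then have vs: "vs \<in> lists Basis" "v \<in> Basis" by auto
  have "open (U \<inter> V)" using Cinf_on_open[OF F] Cinf_on_open[OF G] by auto
  moreover have "((\<lambda>t. a * iter_pderiv vs F (y + t *\<^sub>R v) + b * iter_pderiv vs G (y + t *\<^sub>R v))
      has_real_derivative a * iter_pderiv (v # vs) F y + b * iter_pderiv (v # vs) G y) (at 0)"
    using Cons.prems by (intro DERIV_add DERIV_cmult Cinf_on_has_real_derivative_iter_pderiv[OF F vs]
        Cinf_on_has_real_derivative_iter_pderiv[OF G vs]) auto
  ultimately have "((\<lambda>t. iter_pderiv vs (\<lambda>x. a * F x + b * G x) (y + t *\<^sub>R v)) has_real_derivative
      a * iter_pderiv (v # vs) F y + b * iter_pderiv (v # vs) G y) (at 0)"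
    by (rule line_derivative_cong_open[OF _ Cons.prems]) (use Cons in auto)
  then show ?case by (simp add: pderiv_eqI)
qed simp

lemma Cinf_on_lincomb:
  fixes F G :: "'a::euclidean_space \<Rightarrow> real"
  assumes F: "Cinf_on U F" and G: "Cinf_on V G"
  shows "Cinf_on (U \<inter> V) (\<lambda>x. a * F x + b * G x)"
  unfolding Cinf_on_def
proof (intro conjI ballI)
  show "open (U \<inter> V)" using Cinf_on_open[OF F] Cinf_on_open[OF G] by auto
  fix vs :: "'a list" assume vs: "vs \<in> lists Basis"
  note eq = iter_pderiv_lincomb[OF F G vs]
  have "continuous_on (U \<inter> V) (\<lambda>y. a * iter_pderiv vs F y + b * iter_pderiv vs G y)"
    using F G vs unfolding Cinf_on_def
    by (intro continuous_on_add continuous_on_mult_left) (auto intro: continuous_on_subset)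
  then show "continuous_on (U \<inter> V) (iter_pderiv vs (\<lambda>x. a * F x + b * G x))"
    by (rule continuous_on_eq) (simp add: eq)
  fix v x :: 'a assume v: "v \<in> Basis" and x: "x \<in> U \<inter> V"
  have "((\<lambda>t. iter_pderiv vs (\<lambda>x. a * F x + b * G x) (x + t *\<^sub>R v)) has_real_derivative
      a * iter_pderiv (v # vs) F x + b * iter_pderiv (v # vs) G x) (at 0)"
    using x v \<open>open (U \<inter> V)\<close>
    by (intro line_derivative_cong_open[OF _ x _ eq] DERIV_add DERIV_cmult
        Cinf_on_has_real_derivative_iter_pderiv[OF F vs] Cinf_on_has_real_derivative_iter_pderiv[OF G vs]) auto
  then show "(\<lambda>t. iter_pderiv vs (\<lambda>x. a * F x + b * G x) (x + t *\<^sub>R v)) differentiable (at 0)"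
    using real_differentiable_def by blast
qed

lemma open_vimage_linear:
  fixes L :: "'a::euclidean_space \<Rightarrow> 'b::real_normed_vector"
  assumes "linear L" "open U"
  shows "open (L -` U)"
  using assms by (intro continuous_open_vimage) (auto simp: linear_conv_bounded_linear intro: linear_continuous_at)

lemma has_real_derivative_signed_line:
  assumes F: "Cinf_on U F" and L: "linear L" and ws: "ws \<in> lists Basis" and v': "v' \<in> Basis"
    and Lv: "L v = \<tau> *\<^sub>R v'" and y: "L y \<in> U"
  shows "((\<lambda>t. \<sigma> * iter_pderiv ws F (L (y + t *\<^sub>R v))) has_real_derivative
      \<sigma> * \<tau> * iter_pderiv (v' # ws) F (L y)) (at 0)"
proof -
  have "((\<lambda>s. iter_pderiv ws F (L y + s *\<^sub>R v')) has_real_derivative iter_pderiv (v' # ws) F (L y)) (at (\<tau> * 0))"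
    using Cinf_on_has_real_derivative_iter_pderiv[OF F ws v' y] by simp
  from DERIV_cmult[OF DERIV_chain2[OF this DERIV_cmult_Id[of \<tau>]], of \<sigma>] show ?thesis
    using L Lv by (simp add: linear_add linear_scale mult_ac)
qed

lemma iter_pderiv_comp_signed_perm:
  fixes L :: "'a::euclidean_space \<Rightarrow> 'a" and F :: "'a \<Rightarrow> real"
  assumes F: "Cinf_on U F" and L: "linear L"
    and B: "\<And>b. b \<in> Basis \<Longrightarrow> \<exists>b'\<in>Basis. \<exists>\<tau>. L b = \<tau> *\<^sub>R b'"
    and vs: "vs \<in> lists Basis"
  shows "\<exists>ws\<in>lists Basis. \<exists>\<sigma>. \<forall>y\<in>L -` U. iter_pderiv vs (\<lambda>x. F (L x)) y = \<sigma> * iter_pderiv ws F (L y)"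
  using vs
proof (induction vs)
  case Nil
  then show ?case by (intro bexI[of _ "[]"] exI[of _ 1]) auto
next
  case (Cons v vs)
  then obtain ws \<sigma> where ws: "ws \<in> lists Basis"
      "\<forall>y\<in>L -` U. iter_pderiv vs (\<lambda>x. F (L x)) y = \<sigma> * iter_pderiv ws F (L y)"
    by auto
  obtain v' \<tau> where v': "v' \<in> Basis" "L v = \<tau> *\<^sub>R v'" using B Cons.hyps(1) by blast
  have "open (L -` U)" using open_vimage_linear[OF L Cinf_on_open[OF F]] .
  have "iter_pderiv (v # vs) (\<lambda>x. F (L x)) y = \<sigma> * \<tau> * iter_pderiv (v' # ws) F (L y)"
    if y: "y \<in> L -` U" for y
  proof -
    have "L y \<in> U" using y by simp
    from has_real_derivative_signed_line[OF F L ws(1) v' this, of \<sigma>]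
    have "((\<lambda>t. iter_pderiv vs (\<lambda>x. F (L x)) (y + t *\<^sub>R v)) has_real_derivative
        \<sigma> * \<tau> * iter_pderiv (v' # ws) F (L y)) (at 0)"
      by (rule line_derivative_cong_open[OF \<open>open (L -` U)\<close> y]) (use ws(2) in auto)
    then show ?thesis by (simp add: pderiv_eqI)
  qed
  then show ?case using ws(1) v'(1) by (intro bexI[of _ "v' # ws"] exI[of _ "\<sigma> * \<tau>"]) auto
qed

lemma Cinf_on_comp_signed_perm:
  fixes L :: "'a::euclidean_space \<Rightarrow> 'a" and F :: "'a \<Rightarrow> real"
  assumes F: "Cinf_on U F" and L: "linear L"
    and B: "\<And>b. b \<in> Basis \<Longrightarrow> \<exists>b'\<in>Basis. \<exists>\<tau>. L b = \<tau> *\<^sub>R b'"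
  shows "Cinf_on (L -` U) (\<lambda>x. F (L x))"
  unfolding Cinf_on_def
proof (intro conjI ballI)
  have cL: "continuous_on UNIV L" using L by (simp add: linear_continuous_on linear_conv_bounded_linear)
  show op: "open (L -` U)" using open_vimage_linear[OF L Cinf_on_open[OF F]] .
  fix vs :: "'a list" assume "vs \<in> lists Basis"
  then obtain ws \<sigma> where ws: "ws \<in> lists Basis"
      "\<forall>y\<in>L -` U. iter_pderiv vs (\<lambda>x. F (L x)) y = \<sigma> * iter_pderiv ws F (L y)"
    using iter_pderiv_comp_signed_perm[OF F L B] by blast
  have "continuous_on U (iter_pderiv ws F)" using F ws(1) unfolding Cinf_on_def by blast
  then have "continuous_on (L -` U) (\<lambda>y. \<sigma> * iter_pderiv ws F (L y))"
    by (intro continuous_on_mult_left continuous_on_compose2[OF _ continuous_on_subset[OF cL]]) auto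
  then show "continuous_on (L -` U) (iter_pderiv vs (\<lambda>x. F (L x)))"
    by (rule continuous_on_eq) (use ws(2) in auto)
  fix v x :: 'a assume v: "v \<in> Basis" and x: "x \<in> L -` U"
  obtain v' \<tau> where v': "v' \<in> Basis" "L v = \<tau> *\<^sub>R v'" using B[OF v] by blast
  have "L x \<in> U" using x by simp
  from has_real_derivative_signed_line[OF F L ws(1) v' this, of \<sigma>]
  have "((\<lambda>t. iter_pderiv vs (\<lambda>x. F (L x)) (x + t *\<^sub>R v)) has_real_derivative
      \<sigma> * \<tau> * iter_pderiv (v' # ws) F (L x)) (at 0)"
    by (rule line_derivative_cong_open[OF op x]) (use ws(2) in auto)
  then show "(\<lambda>t. iter_pderiv vs (\<lambda>x. F (L x)) (x + t *\<^sub>R v)) differentiable (at 0)"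
    unfolding real_differentiable_def by blast
qed

lemma smooth_SO6_vanishes: "smooth_SO6 f \<Longrightarrow> x \<notin> SO6 \<Longrightarrow> f x = 0"
  unfolding smooth_SO6_def by blast

lemma smooth_SO6_zero: "smooth_SO6 (\<lambda>x. 0)"
proof -
  have "iter_pderiv vs (\<lambda>x::mat6. 0::real) = (\<lambda>x. 0)" for vs
    by (induction vs) (auto simp: pderiv_def)
  then have "Cinf_on UNIV (\<lambda>x::mat6. 0::real)" unfolding Cinf_on_def by simp
  then show ?thesis unfolding smooth_SO6_def by blast
qed

lemma smooth_SO6_lincomb:
  assumes "smooth_SO6 f" "smooth_SO6 h"
  shows "smooth_SO6 (\<lambda>x. a * f x + b * h x)"
proof -
  obtain U F where U: "SO6 \<subseteq> U" "Cinf_on U F" "\<forall>g\<in>SO6. f g = F g" "\<forall>x. x \<notin> SO6 \<longrightarrow> f x = 0"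
    using assms(1) unfolding smooth_SO6_def by blast
  obtain V G where V: "SO6 \<subseteq> V" "Cinf_on V G" "\<forall>g\<in>SO6. h g = G g" "\<forall>x. x \<notin> SO6 \<longrightarrow> h x = 0"
    using assms(2) unfolding smooth_SO6_def by blast
  show ?thesis unfolding smooth_SO6_def
    using U V Cinf_on_lincomb[OF U(2) V(2), of a b]
    by (intro conjI exI[of _ "U \<inter> V"] exI[of _ "\<lambda>x. a * F x + b * G x"]) auto
qed

lemma smooth_SO6_sum:
  assumes "finite K" "\<And>k. k \<in> K \<Longrightarrow> smooth_SO6 (fs k)"
  shows "smooth_SO6 (\<lambda>x. \<Sum>k\<in>K. c k * fs k x)"
  using assms
proof (induction K rule: finite_induct)
  case empty
  then show ?case using smooth_SO6_zero by simp
next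
  case (insert k K)
  then have "smooth_SO6 (\<lambda>x. c k * fs k x + 1 * (\<Sum>k\<in>K. c k * fs k x))"
    by (intro smooth_SO6_lincomb) auto
  then show ?case using insert.hyps by simp
qed

lemma munit_nth: "munit a b $ r $ s = (if r = a \<and> s = b then 1 else 0)"
  unfolding munit_def by simp

lemma Basis_mat6: "(Basis :: mat6 set) = {munit i j | i j. True}"
proof -
  have "axis i (axis j (1::real)) = munit i j" for i j :: 6
    unfolding munit_def axis_def by (auto simp: vec_eq_iff)
  then show ?thesis unfolding Basis_vec_def by auto
qed

lemma smooth_SO6_left_mult:
  fixes M :: mat6
  assumes f: "smooth_SO6 f" and M: "M \<in> SO6"
    and B: "\<And>i j. \<exists>i' \<tau>. M ** munit i j = \<tau> *\<^sub>R munit i' j"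
  shows "smooth_SO6 (\<lambda>x. f (M ** x))"
proof -
  obtain U F where U: "SO6 \<subseteq> U" "Cinf_on U F" "\<forall>g\<in>SO6. f g = F g" "\<forall>x. x \<notin> SO6 \<longrightarrow> f x = 0"
    using f unfolding smooth_SO6_def by blast
  have L: "linear (\<lambda>x::mat6. M ** x)"
    by (rule linearI) (simp_all add: matrix_add_ldistrib matrix_scalar_ac scalar_matrix_assoc)
  have "\<exists>b'\<in>Basis. \<exists>\<tau>. M ** b = \<tau> *\<^sub>R b'" if "b \<in> Basis" for b :: mat6
    using that B unfolding Basis_mat6 by blast
  from Cinf_on_comp_signed_perm[OF U(2) L this]
  show ?thesis unfolding smooth_SO6_def
    using U SO6_mult[OF M] SO6_mult_left_iff[OF M]
    by (intro conjI exI[of _ "(\<lambda>x. M ** x) -` U"] exI[of _ "\<lambda>x. F (M ** x)"])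
       (auto intro!: subsetD[OF U(1)])
qed

lemma smooth_SO6_sign_diag:
  assumes "smooth_SO6 f" "A \<in> even_subsets"
  shows "smooth_SO6 (\<lambda>x. f (sign_diag A ** x))"
proof (rule smooth_SO6_left_mult[OF assms(1)])
  show "sign_diag A \<in> SO6" using assms(2) by (simp add: sign_diag_SO6_iff)
  fix i j
  have "sign_diag A ** munit i j = (if i \<in> A then -1 else 1) *\<^sub>R munit i j"
    by (auto simp: vec_eq_iff sign_diag_mult_nth munit_nth)
  then show "\<exists>i' \<tau>. sign_diag A ** munit i j = \<tau> *\<^sub>R munit i' j" by blast
qed

lemma smooth_SO6_perm_matrix:
  assumes "smooth_SO6 f" "\<And>i. p (p i) = i" "sign p = 1"
  shows "smooth_SO6 (\<lambda>x. f (perm_matrix p ** x))"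
proof (rule smooth_SO6_left_mult[OF assms(1) perm_matrix_SO6[OF assms(2,3)]])
  fix i j
  have "perm_matrix p ** munit i j = 1 *\<^sub>R munit (p i) j"
    by (auto simp: vec_eq_iff perm_matrix_mult_nth munit_nth) (metis assms(2))+
  then show "\<exists>i' \<tau>. perm_matrix p ** munit i j = \<tau> *\<^sub>R munit i' j" by blast
qed

section \<open>Rotations in coordinate planes and the Laplacian\<close>

lemma matrix_add_rdistrib: "(A + B) ** C = A ** C + B ** C" for A :: "'a::semiring_1^'n^'m"
  by (simp add: matrix_matrix_mult_def vec_eq_iff sum.distrib distrib_right)

lemma matrix_diff_ldistrib: "C ** (A - B) = C ** A - C ** B" for A :: "'a::ring_1^'n^'m"
  by (simp add: matrix_matrix_mult_def vec_eq_iff sum_subtractf right_diff_distrib)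

lemma matrix_diff_rdistrib: "(A - B) ** C = A ** C - B ** C" for A :: "'a::ring_1^'n^'m"
  by (simp add: matrix_matrix_mult_def vec_eq_iff sum_subtractf left_diff_distrib)

lemma matrix_scaleR_left: "(k *\<^sub>R A) ** B = k *\<^sub>R (A ** B)" for A :: "'a::real_algebra_1^'n^'m"
  by (simp add: scalar_matrix_assoc)

lemma matrix_scaleR_right: "A ** (k *\<^sub>R B) = k *\<^sub>R (A ** B)" for A :: "'a::real_algebra_1^'n^'m"
  by (simp add: matrix_scalar_ac scalar_matrix_assoc)

lemma transpose_add_matrix: "transpose (A + B) = transpose A + transpose B"
  unfolding transpose_def by (simp add: vec_eq_iff)

lemma transpose_diff_matrix: "transpose (A - B) = transpose A - transpose B"
  unfolding transpose_def by (simp add: vec_eq_iff)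

lemma munit_mult_nth: "(munit a b ** M) $ r $ s = (if r = a then M $ b $ s else 0)"
proof -
  have "(munit a b ** M) $ r $ s = (\<Sum>k\<in>UNIV. (if r = a \<and> k = b then 1 else 0) * M $ k $ s)"
    unfolding munit_def matrix_matrix_mult_def by simp
  also have "\<dots> = (\<Sum>k\<in>UNIV. (if k = b then (if r = a then M $ k $ s else 0) else 0))"
    by (rule sum.cong) auto
  finally show ?thesis by simp
qed

lemma munit_mult: "munit a b ** munit c d = (if b = c then munit a d else 0)"
  by (simp add: vec_eq_iff munit_mult_nth munit_nth)

lemma transpose_munit: "transpose (munit a b) = munit b a"
  unfolding transpose_def munit_def by (auto simp: vec_eq_iff)

definition coord_proj :: "6 \<Rightarrow> 6 \<Rightarrow> mat6" where
  "coord_proj i j = munit i i + munit j j"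

definition coord_skew :: "6 \<Rightarrow> 6 \<Rightarrow> mat6" where
  "coord_skew i j = munit i j - munit j i"

lemmas matrix_ring_simps = matrix_add_rdistrib matrix_add_ldistrib matrix_diff_rdistrib
  matrix_diff_ldistrib matrix_scaleR_left matrix_scaleR_right munit_mult

lemma coord_proj_coord_skew:
  assumes "i \<noteq> j"
  shows "coord_proj i j ** coord_proj i j = coord_proj i j"
    "coord_proj i j ** coord_skew i j = coord_skew i j"
    "coord_skew i j ** coord_proj i j = coord_skew i j"
    "coord_skew i j ** coord_skew i j = - coord_proj i j"
  unfolding coord_proj_def coord_skew_def using assms by (simp_all add: matrix_ring_simps)

lemma skewbasis_eq: "skewbasis i j = (1 / sqrt 2) *\<^sub>R coord_skew i j"
  unfolding skewbasis_def coord_skew_def by simp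

text \<open>The angle is \<open>t / sqrt 2\<close> because \<open>skewbasis i j\<close> is normalised for the trace form.\<close>

definition plane_rotation :: "6 \<Rightarrow> 6 \<Rightarrow> real \<Rightarrow> mat6" where
  "plane_rotation i j t =
     mat 1 + (cos (t / sqrt 2) - 1) *\<^sub>R coord_proj i j + sin (t / sqrt 2) *\<^sub>R coord_skew i j"

lemma plane_rotation_add:
  assumes "i \<noteq> j"
  shows "plane_rotation i j a ** plane_rotation i j b = plane_rotation i j (a + b)"
proof -
  let ?P = "coord_proj i j" and ?Y = "coord_skew i j"
  let ?ca = "cos (a / sqrt 2)" and ?sa = "sin (a / sqrt 2)"
    and ?cb = "cos (b / sqrt 2)" and ?sb = "sin (b / sqrt 2)"
  have "plane_rotation i j a ** plane_rotation i j b
      = mat 1 + ((?ca - 1) + (?cb - 1) + (?ca - 1) * (?cb - 1) - ?sa * ?sb) *\<^sub>R ?P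
        + (?sa + ?sb + (?ca - 1) * ?sb + ?sa * (?cb - 1)) *\<^sub>R ?Y"
    unfolding plane_rotation_def using coord_proj_coord_skew[OF assms]
    by (simp add: matrix_ring_simps algebra_simps scaleR_add_left scaleR_diff_left)
  also have "\<dots> = plane_rotation i j (a + b)"
    unfolding plane_rotation_def by (simp add: add_divide_distrib cos_add sin_add algebra_simps)
  finally show ?thesis .
qed

lemma plane_rotation_SO6:
  assumes "i \<noteq> j"
  shows "plane_rotation i j t \<in> SO6"
proof -
  have tr: "transpose (plane_rotation i j s) = plane_rotation i j (- s)" for s
    unfolding plane_rotation_def coord_proj_def coord_skew_def
    by (simp add: transpose_add_matrix transpose_diff_matrix transpose_scalar transpose_munit algebra_simps)
  have orth: "transpose (plane_rotation i j s) ** plane_rotation i j s = mat 1" for s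
  proof -
    have "transpose (plane_rotation i j s) ** plane_rotation i j s = plane_rotation i j (- s + s)"
      unfolding tr by (rule plane_rotation_add[OF assms])
    then show ?thesis by (simp add: plane_rotation_def)
  qed
  have det_sq: "det (plane_rotation i j s) ^ 2 = 1" for s
    using arg_cong[OF orth[of s], of det] by (simp add: det_mul det_transpose power2_eq_square)
  have "det (plane_rotation i j t) = det (plane_rotation i j (t / 2) ** plane_rotation i j (t / 2))"
    by (simp add: plane_rotation_add[OF assms])
  then have "det (plane_rotation i j t) = det (plane_rotation i j (t / 2)) ^ 2"
    by (simp add: det_mul power2_eq_square)
  then show ?thesis using orth det_sq[of "t / 2"] unfolding SO6_def by simp
qed

lemma mpow_0: "mpow X 0 = mat 1"
  unfolding mpow_def by simp

lemma mpow_Suc: "mpow X (Suc k) = X ** mpow X k"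
  unfolding mpow_def by simp

lemma mpow_scaleR: "mpow (t *\<^sub>R X) k = (t ^ k) *\<^sub>R mpow X k"
  by (induction k) (simp_all add: mpow_def mpow_Suc matrix_scaleR_left matrix_scaleR_right)

lemma mpow_coord_skew:
  assumes "i \<noteq> j"
  shows "mpow (coord_skew i j) (2 * m + 1) = (-1) ^ m *\<^sub>R coord_skew i j"
    "mpow (coord_skew i j) (2 * m + 2) = (-1) ^ (m + 1) *\<^sub>R coord_proj i j"
proof (induction m)
  case 0
  show "mpow (coord_skew i j) (2 * 0 + 1) = (-1) ^ 0 *\<^sub>R coord_skew i j"
    "mpow (coord_skew i j) (2 * 0 + 2) = (-1) ^ (0 + 1) *\<^sub>R coord_proj i j"
    using coord_proj_coord_skew[OF assms] by (simp_all add: mpow_def numeral_2_eq_2)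
next
  case (Suc m)
  have step: "mpow (coord_skew i j) (2 * Suc m + k) = coord_skew i j ** (coord_skew i j ** mpow (coord_skew i j) (2 * m + k))" for k
    by (simp add: mpow_Suc)
  show "mpow (coord_skew i j) (2 * Suc m + 1) = (-1) ^ Suc m *\<^sub>R coord_skew i j"
    "mpow (coord_skew i j) (2 * Suc m + 2) = (-1) ^ (Suc m + 1) *\<^sub>R coord_proj i j"
    unfolding step Suc.IH using coord_proj_coord_skew[OF assms]
    by (simp_all add: matrix_scaleR_right matrix_mul_assoc matrix_mul_uminus_left matrix_mul_uminus_right)
qed

lemma exp_series_term_skewbasis:
  assumes "i \<noteq> j"
  shows "(1 / fact k) *\<^sub>R mpow (t *\<^sub>R skewbasis i j) k =
    (if k = 0 then mat 1 - coord_proj i j else 0)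
    + (cos_coeff k * (t / sqrt 2) ^ k) *\<^sub>R coord_proj i j + (sin_coeff k * (t / sqrt 2) ^ k) *\<^sub>R coord_skew i j"
proof -
  have "t *\<^sub>R skewbasis i j = (t / sqrt 2) *\<^sub>R coord_skew i j" by (simp add: skewbasis_eq)
  then have eq: "(1 / fact k) *\<^sub>R mpow (t *\<^sub>R skewbasis i j) k
      = ((t / sqrt 2) ^ k / fact k) *\<^sub>R mpow (coord_skew i j) k"
    by (simp only: mpow_scaleR) simp
  consider "k = 0" | m where "k = 2 * m + 1" | m where "k = 2 * m + 2"
  proof (cases "even k")
    case True
    then obtain m where "k = 2 * m" by blast
    then show ?thesis using that(1,3) by (cases m) auto
  next
    case False
    then show ?thesis using that(2) oddE by blast
  qed
  then show ?thesis
  proof cases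
    case 1
    then show ?thesis unfolding eq by (simp add: mpow_0)
  next
    case (2 m)
    then show ?thesis unfolding eq unfolding 2 mpow_coord_skew(1)[OF assms] by (simp add: cos_coeff_def sin_coeff_def mult_ac)
  next
    case (3 m)
    then show ?thesis unfolding eq unfolding 3 mpow_coord_skew(2)[OF assms] by (simp add: cos_coeff_def sin_coeff_def mult_ac)
  qed
qed

lemma mexp_skewbasis:
  assumes "i \<noteq> j"
  shows "mexp (t *\<^sub>R skewbasis i j) = plane_rotation i j t"
proof -
  let ?x = "t / sqrt 2"
  have "(\<lambda>k. if k = 0 then mat 1 - coord_proj i j else 0) sums (mat 1 - coord_proj i j)"
    by (rule sums_single)
  moreover have "(\<lambda>k. (cos_coeff k * ?x ^ k) *\<^sub>R coord_proj i j) sums (cos ?x *\<^sub>R coord_proj i j)"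
    using sums_scaleR_left[OF cos_converges[of ?x]] by simp
  moreover have "(\<lambda>k. (sin_coeff k * ?x ^ k) *\<^sub>R coord_skew i j) sums (sin ?x *\<^sub>R coord_skew i j)"
    using sums_scaleR_left[OF sin_converges[of ?x]] by simp
  ultimately have "(\<lambda>k. (1 / fact k) *\<^sub>R mpow (t *\<^sub>R skewbasis i j) k)
      sums ((mat 1 - coord_proj i j) + cos ?x *\<^sub>R coord_proj i j + sin ?x *\<^sub>R coord_skew i j)"
    unfolding exp_series_term_skewbasis[OF assms] by (intro sums_add)
  moreover have "(mat 1 - coord_proj i j) + cos ?x *\<^sub>R coord_proj i j + sin ?x *\<^sub>R coord_skew i j
      = plane_rotation i j t"
    unfolding plane_rotation_def by (simp add: algebra_simps scaleR_diff_left)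
  ultimately show ?thesis unfolding mexp_def by (simp add: sums_iff)
qed

definition plane_rotation_deriv :: "6 \<Rightarrow> 6 \<Rightarrow> real \<Rightarrow> mat6" where
  "plane_rotation_deriv i j t =
     (- sin (t / sqrt 2) / sqrt 2) *\<^sub>R coord_proj i j + (cos (t / sqrt 2) / sqrt 2) *\<^sub>R coord_skew i j"

lemma has_vector_derivative_rotation_curve:
  "((\<lambda>t. g ** plane_rotation i j t) has_vector_derivative g ** plane_rotation_deriv i j t) (at t)"
proof -
  have sq: "x * sqrt 2 / 2 = x / sqrt (2::real)" for x
    by (metis divide_divide_eq_right real_div_sqrt zero_le_numeral)
  have "(\<lambda>t. g ** plane_rotation i j t)
      = (\<lambda>t. g + (cos (t / sqrt 2) - 1) *\<^sub>R (g ** coord_proj i j) + sin (t / sqrt 2) *\<^sub>R (g ** coord_skew i j))"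
    unfolding plane_rotation_def by (simp add: matrix_add_ldistrib matrix_scaleR_right)
  moreover have "((\<lambda>t. g + (cos (t / sqrt 2) - 1) *\<^sub>R (g ** coord_proj i j) + sin (t / sqrt 2) *\<^sub>R (g ** coord_skew i j))
      has_vector_derivative g ** plane_rotation_deriv i j t) (at t)"
    unfolding plane_rotation_deriv_def
    by (rule has_vector_derivative_eq_rhs)
       (auto intro!: derivative_eq_intros simp: sq matrix_add_ldistrib matrix_diff_ldistrib matrix_scaleR_right)
  ultimately show ?thesis by simp
qed

lemma has_real_derivative_rotation_curve:
  assumes G: "Cinf_on U G" and "SO6 \<subseteq> U" and "g \<in> SO6" and "i \<noteq> j"
  shows "((\<lambda>t. G (g ** plane_rotation i j t)) has_real_derivative
      (\<Sum>b\<in>Basis. ((g ** plane_rotation_deriv i j t) \<bullet> b) * pderiv b G (g ** plane_rotation i j t))) (at t)"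
proof -
  have x: "g ** plane_rotation i j t \<in> U" using assms SO6_mult plane_rotation_SO6 by blast
  let ?v = "g ** plane_rotation_deriv i j t" and ?x = "g ** plane_rotation i j t"
  have "((\<lambda>t. G (g ** plane_rotation i j t)) has_derivative
      (\<lambda>s. \<Sum>b\<in>Basis. ((s *\<^sub>R ?v) \<bullet> b) * pderiv b G ?x)) (at t)"
    using has_derivative_compose[OF has_vector_derivative_rotation_curve[unfolded has_vector_derivative_def]
        Cinf_on_has_derivative[OF G x]] .
  moreover have "(\<lambda>s. \<Sum>b\<in>Basis. ((s *\<^sub>R ?v) \<bullet> b) * pderiv b G ?x)
      = (*) (\<Sum>b\<in>Basis. (?v \<bullet> b) * pderiv b G ?x)"
    by (auto simp: sum_distrib_left mult_ac)
  ultimately show ?thesis unfolding has_field_derivative_def by simp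
qed

lemma smooth_SO6_rotation_curve_twice_differentiable:
  assumes f: "smooth_SO6 f" and g: "g \<in> SO6" and ij: "i \<noteq> j"
  obtains \<psi> where "\<And>t. ((\<lambda>t. f (g ** mexp (t *\<^sub>R skewbasis i j))) has_real_derivative \<psi> t) (at t)"
    "\<psi> differentiable (at 0)"
proof -
  obtain U F where UF: "SO6 \<subseteq> U" "Cinf_on U F" "\<And>x. x \<in> SO6 \<Longrightarrow> f x = F x"
    using f unfolding smooth_SO6_def by blast
  have eq: "(\<lambda>t. f (g ** mexp (t *\<^sub>R skewbasis i j))) = (\<lambda>t. F (g ** plane_rotation i j t))"
    using UF(3) SO6_mult[OF g plane_rotation_SO6[OF ij]] by (simp add: mexp_skewbasis[OF ij])
  define \<psi> where "\<psi> t = (\<Sum>b\<in>Basis. ((g ** plane_rotation_deriv i j t) \<bullet> b) * pderiv b F (g ** plane_rotation i j t))" for t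
  have "(\<lambda>t. (g ** plane_rotation_deriv i j t) \<bullet> b) differentiable (at 0)" for b
    unfolding plane_rotation_deriv_def matrix_add_ldistrib matrix_scaleR_right inner_add_left inner_scaleR_left
    by (intro derivative_intros) (auto simp: real_differentiable_def intro!: derivative_eq_intros)
  moreover have "(\<lambda>t. pderiv b F (g ** plane_rotation i j t)) differentiable (at 0)" if "b \<in> Basis" for b
    using has_real_derivative_rotation_curve[OF Cinf_on_pderiv[OF UF(2) that] UF(1) g ij]
    unfolding real_differentiable_def by blast
  ultimately have "\<psi> differentiable (at 0)"
    unfolding \<psi>_def[abs_def] by (intro differentiable_sum differentiable_mult) auto
  moreover have "((\<lambda>t. f (g ** mexp (t *\<^sub>R skewbasis i j))) has_real_derivative \<psi> t) (at t)" for t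
    unfolding eq \<psi>_def by (rule has_real_derivative_rotation_curve[OF UF(2,1) g ij])
  ultimately show ?thesis using that by blast
qed

lemma deriv2_sum:
  fixes \<phi> :: "'k \<Rightarrow> real \<Rightarrow> real"
  assumes "finite K"
    and "\<And>k. k \<in> K \<Longrightarrow> \<exists>\<psi>. (\<forall>t. (\<phi> k has_real_derivative \<psi> t) (at t)) \<and> \<psi> differentiable (at 0)"
  shows "deriv (deriv (\<lambda>t. \<Sum>k\<in>K. c k * \<phi> k t)) 0 = (\<Sum>k\<in>K. c k * deriv (deriv (\<phi> k)) 0)"
proof -
  obtain \<psi> where \<psi>: "\<And>k t. k \<in> K \<Longrightarrow> (\<phi> k has_real_derivative \<psi> k t) (at t)"
    "\<And>k. k \<in> K \<Longrightarrow> \<psi> k differentiable (at 0)"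
    using assms(2) by metis
  have "((\<lambda>t. \<Sum>k\<in>K. c k * \<phi> k t) has_real_derivative (\<Sum>k\<in>K. c k * \<psi> k t)) (at t)" for t
    by (intro DERIV_sum DERIV_cmult \<psi>(1))
  then have "deriv (\<lambda>t. \<Sum>k\<in>K. c k * \<phi> k t) = (\<lambda>t. \<Sum>k\<in>K. c k * \<psi> k t)"
    using DERIV_imp_deriv by blast
  moreover have "((\<lambda>t. \<Sum>k\<in>K. c k * \<psi> k t) has_real_derivative (\<Sum>k\<in>K. c k * deriv (\<psi> k) 0)) (at 0)"
    using \<psi>(2) by (intro DERIV_sum DERIV_cmult) (simp add: DERIV_deriv_iff_real_differentiable)
  moreover have "deriv (\<phi> k) = \<psi> k" if "k \<in> K" for k
    using \<psi>(1)[OF that] DERIV_imp_deriv by blast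
  ultimately show ?thesis using DERIV_imp_deriv by simp
qed

lemma laplace_sum:
  assumes "finite K" "\<And>k. k \<in> K \<Longrightarrow> smooth_SO6 (fs k)" "g \<in> SO6"
  shows "laplace (\<lambda>x. \<Sum>k\<in>K. c k * fs k x) g = (\<Sum>k\<in>K. c k * laplace (fs k) g)"
proof -
  let ?d2 = "\<lambda>k i j. deriv (deriv (\<lambda>t. fs k (g ** mexp (t *\<^sub>R skewbasis i j)))) 0"
  have "deriv (deriv (\<lambda>t. \<Sum>k\<in>K. c k * fs k (g ** mexp (t *\<^sub>R skewbasis i j)))) 0 = (\<Sum>k\<in>K. c k * ?d2 k i j)"
    if "i < j" for i j :: 6
  proof (rule deriv2_sum[OF assms(1)])
    fix k assume "k \<in> K"
    from smooth_SO6_rotation_curve_twice_differentiable[OF assms(2)[OF this] assms(3), of i j] that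
    show "\<exists>\<psi>. (\<forall>t. ((\<lambda>t. fs k (g ** mexp (t *\<^sub>R skewbasis i j))) has_real_derivative \<psi> t) (at t))
        \<and> \<psi> differentiable (at 0)" by (metis less_irrefl)
  qed
  then have "laplace (\<lambda>x. \<Sum>k\<in>K. c k * fs k x) g = - (\<Sum>(i, j)\<in>{(i, j). i < j}. \<Sum>k\<in>K. c k * ?d2 k i j)"
    unfolding laplace_def by (intro arg_cong[where f = uminus] sum.cong) auto
  also have "\<dots> = (\<Sum>k\<in>K. c k * laplace (fs k) g)"
    unfolding laplace_def by (simp add: sum_distrib_left sum_negf case_prod_unfold) (rule sum.swap)
  finally show ?thesis .
qed

lemma laplace_left_mult: "laplace (\<lambda>x. u (M ** x)) g = laplace u (M ** g)"
  unfolding laplace_def by (simp add: matrix_mul_assoc)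

definition laplace_eigen :: "real \<Rightarrow> (mat6 \<Rightarrow> real) \<Rightarrow> bool" where
  "laplace_eigen lam u \<longleftrightarrow> (\<forall>g\<in>SO6. laplace u g = lam * u g)"

lemma laplace_eigen_left_mult: "laplace_eigen lam u \<Longrightarrow> M \<in> SO6 \<Longrightarrow> laplace_eigen lam (\<lambda>x. u (M ** x))"
  unfolding laplace_eigen_def laplace_left_mult using SO6_mult by blast

lemma laplace_eigen_sum:
  assumes "finite K" "\<And>k. k \<in> K \<Longrightarrow> smooth_SO6 (fs k)" "\<And>k. k \<in> K \<Longrightarrow> laplace_eigen lam (fs k)"
  shows "laplace_eigen lam (\<lambda>x. \<Sum>k\<in>K. c k * fs k x)"
  using assms laplace_sum[OF assms(1,2)]
  unfolding laplace_eigen_def by (simp add: sum_distrib_left mult_ac)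

section \<open>Isotypic components and transplantation\<close>

definition isotypic :: "6 set \<Rightarrow> (mat6 \<Rightarrow> real) \<Rightarrow> mat6 \<Rightarrow> real" where
  "isotypic S f x = (\<Sum>A\<in>even_subsets. character S A / 32 * f (sign_diag A ** x))"

definition has_character :: "6 set \<Rightarrow> (mat6 \<Rightarrow> real) \<Rightarrow> bool" where
  "has_character S u \<longleftrightarrow> (\<forall>A\<in>even_subsets. \<forall>x. u (sign_diag A ** x) = character S A * u x)"

text \<open>\<open>character S\<close> and \<open>character S'\<close> agree on \<open>even_subsets\<close> iff \<open>sym_diff S S'\<close> is \<open>{}\<close>
  or \<open>UNIV\<close>, so this says that the members of \<open>K\<close> index pairwise different characters.\<close>

definition distinct_characters :: "6 set set \<Rightarrow> bool" where
  "distinct_characters K \<longleftrightarrow> (\<forall>S\<in>K. \<forall>S'\<in>K. S \<noteq> S' \<longrightarrow> sym_diff S S' \<notin> {{}, UNIV})"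

lemma has_character_isotypic: "has_character S (isotypic S f)"
  unfolding has_character_def
proof (intro ballI allI)
  fix B x assume B: "B \<in> even_subsets"
  have "isotypic S f (sign_diag B ** x)
      = (\<Sum>A\<in>even_subsets. character S A / 32 * f (sign_diag (sym_diff A B) ** x))"
    unfolding isotypic_def by (simp add: matrix_mul_assoc sign_diag_mult)
  also have "\<dots> = (\<Sum>A\<in>even_subsets. character S (sym_diff A B) / 32 * f (sign_diag (sym_diff (sym_diff A B) B) ** x))"
    by (rule sum_even_subsets_sym_diff[OF B, symmetric])
  also have "\<dots> = (\<Sum>A\<in>even_subsets. character S B * (character S A / 32 * f (sign_diag A ** x)))"
  proof (rule sum.cong)
    fix A
    have "sym_diff (sym_diff A B) B = A" by blast
    then show "character S (sym_diff A B) / 32 * f (sign_diag (sym_diff (sym_diff A B) B) ** x)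
        = character S B * (character S A / 32 * f (sign_diag A ** x))"
      by (simp add: character_sym_diff)
  qed simp
  finally show "isotypic S f (sign_diag B ** x) = character S B * isotypic S f x"
    unfolding isotypic_def by (simp add: sum_distrib_left)
qed

lemma isotypic_has_character:
  assumes "has_character S' u"
  shows "isotypic S u x = (\<Sum>A\<in>even_subsets. character (sym_diff S S') A) / 32 * u x"
proof -
  have "isotypic S u x = (\<Sum>A\<in>even_subsets. character S A * character S' A / 32 * u x)"
    using assms unfolding isotypic_def has_character_def by (intro sum.cong) auto
  then show ?thesis by (simp add: character_sym_diff_left sum_divide_distrib sum_distrib_right)
qed

lemma isotypic_self: "has_character S u \<Longrightarrow> isotypic S u = u"
  using isotypic_has_character[of S u S] by (simp add: fun_eq_iff card_even_subsets)

lemma isotypic_other: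
  assumes "has_character S' u" "sym_diff S S' \<notin> {{}, UNIV}"
  shows "isotypic S u x = 0"
proof -
  obtain i j where "i \<in> sym_diff S S'" "j \<notin> sym_diff S S'" using assms(2) by blast
  then have "(\<Sum>A\<in>even_subsets. character (sym_diff S S') A) = 0" by (rule sum_character_eq_0)
  then show ?thesis using isotypic_has_character[OF assms(1), of S x] by simp
qed

lemma isotypic_sum: "isotypic S (\<lambda>x. \<Sum>k\<in>K. u k x) x = (\<Sum>k\<in>K. isotypic S (u k) x)"
  unfolding isotypic_def by (simp add: sum_distrib_left) (rule sum.swap)

lemma isotypic_lincomb: "isotypic S (\<lambda>x. a * f x + b * g x) x = a * isotypic S f x + b * isotypic S g x"
  unfolding isotypic_def by (simp add: sum.distrib sum_distrib_left algebra_simps)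

lemma isotypic_right_mult: "(\<And>x. f (x ** b) = f x) \<Longrightarrow> isotypic S f (x ** b) = isotypic S f x"
  unfolding isotypic_def by (simp add: matrix_mul_assoc)

lemma has_character_perm_matrix:
  assumes u: "has_character S u" and p: "\<And>i. p (p i) = i"
  shows "has_character (p -` S) (\<lambda>x. u (perm_matrix p ** x))"
  unfolding has_character_def
proof (intro ballI allI)
  fix A x assume A: "A \<in> even_subsets"
  have bij: "bij p" using p by (metis bij_betw_byWitness top_greatest UNIV_I)
  have img: "p ` A = p -` A" using p by (auto simp: image_iff) (metis p)+
  have "card (p ` A) = card A"
    using bij inj_on_subset[of p UNIV A] by (simp add: bij_def card_image)
  then have "p -` A \<in> even_subsets" using A unfolding even_subsets_def img[symmetric] by simp
  then have "u (sign_diag (p -` A) ** (perm_matrix p ** x)) = character S (p -` A) * u (perm_matrix p ** x)"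
    using u unfolding has_character_def by blast
  then show "u (perm_matrix p ** (sign_diag A ** x)) = character (p -` S) A * u (perm_matrix p ** x)"
    by (simp add: matrix_mul_assoc perm_matrix_sign_diag character_vimage[OF bij] img)
qed

lemma sum_isotypic_eq:
  assumes dist: "distinct_characters K" and empty: "{} \<in> K"
    and orth: "\<And>A. A \<in> even_subsets - char_kernel K \<Longrightarrow> (\<Sum>S\<in>K. character S A) = 0"
    and inv: "\<And>A x. A \<in> char_kernel K \<Longrightarrow> f (sign_diag A ** x) = f x"
  shows "(\<Sum>S\<in>K. isotypic S f x) = f x"
proof -
  have "(\<Sum>S\<in>K. isotypic S f x) = (\<Sum>A\<in>even_subsets. (\<Sum>S\<in>K. character S A) / 32 * f (sign_diag A ** x))"
    unfolding isotypic_def by (simp add: sum_divide_distrib sum_distrib_right) (rule sum.swap)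
  also have "\<dots> = (\<Sum>A\<in>even_subsets. (\<Sum>S\<in>K. character S A) / 32 * f x)"
  proof (rule sum.cong)
    fix A assume "A \<in> even_subsets"
    then show "(\<Sum>S\<in>K. character S A) / 32 * f (sign_diag A ** x) = (\<Sum>S\<in>K. character S A) / 32 * f x"
      using orth[of A] inv[of A x] by (cases "A \<in> char_kernel K") auto
  qed simp
  also have "\<dots> = (\<Sum>S\<in>K. \<Sum>A\<in>even_subsets. character S A) / 32 * f x"
    by (simp add: sum_divide_distrib[symmetric] sum_distrib_right[symmetric] sum.swap[of _ K])
  also have "(\<Sum>S\<in>K. \<Sum>A\<in>even_subsets. character S A) = (\<Sum>S\<in>K. if S = {} then 32 else 0)"
  proof (rule sum.cong)
    fix S assume "S \<in> K"
    then have "S = {} \<or> sym_diff S {} \<notin> {{}, UNIV}" using dist empty unfolding distinct_characters_def by blast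
    then show "(\<Sum>A\<in>even_subsets. character S A) = (if S = {} then 32 else 0)"
      using sum_character_empty sum_character_eq_0[of _ S] by auto
  qed simp
  finally show ?thesis using empty by simp
qed

lemma smooth_SO6_isotypic: "smooth_SO6 f \<Longrightarrow> smooth_SO6 (isotypic S f)"
  unfolding isotypic_def by (intro smooth_SO6_sum smooth_SO6_sign_diag) auto

lemma laplace_eigen_isotypic:
  "smooth_SO6 f \<Longrightarrow> laplace_eigen lam f \<Longrightarrow> laplace_eigen lam (isotypic S f)"
  unfolding isotypic_def
  by (intro laplace_eigen_sum smooth_SO6_sign_diag laplace_eigen_left_mult) (auto simp: sign_diag_SO6_iff)

definition transplant :: "6 set set \<Rightarrow> (6 set \<Rightarrow> 6 \<Rightarrow> 6) \<Rightarrow> (mat6 \<Rightarrow> real) \<Rightarrow> mat6 \<Rightarrow> real" where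
  "transplant K p f x = (\<Sum>S\<in>K. isotypic S f (perm_matrix (p S) ** x))"

lemma transplant_lincomb:
  "transplant K p (\<lambda>x. a * f x + b * g x) x = a * transplant K p f x + b * transplant K p g x"
  unfolding transplant_def isotypic_lincomb by (simp add: sum.distrib sum_distrib_left)

lemma transplant_right_mult: "(\<And>x. f (x ** b) = f x) \<Longrightarrow> transplant K p f (x ** b) = transplant K p f x"
  unfolding transplant_def by (simp add: matrix_mul_assoc isotypic_right_mult)

lemma transplant_left_sign_diag:
  assumes "\<And>S i. S \<in> K \<Longrightarrow> p S (p S i) = i" "A \<in> char_kernel ((\<lambda>S. p S -` S) ` K)"
  shows "transplant K p f (sign_diag A ** x) = transplant K p f x"
  unfolding transplant_def
proof (rule sum.cong)
  fix S assume "S \<in> K"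
  from has_character_perm_matrix[OF has_character_isotypic assms(1)[OF this]]
  show "isotypic S f (perm_matrix (p S) ** (sign_diag A ** x)) = isotypic S f (perm_matrix (p S) ** x)"
    using assms(2) \<open>S \<in> K\<close> unfolding has_character_def char_kernel_def by auto
qed simp

lemma smooth_SO6_transplant:
  assumes "\<And>S i. S \<in> K \<Longrightarrow> p S (p S i) = i" "\<And>S. S \<in> K \<Longrightarrow> sign (p S) = 1" "smooth_SO6 f"
  shows "smooth_SO6 (transplant K p f)"
  using smooth_SO6_sum[of K "\<lambda>S x. isotypic S f (perm_matrix (p S) ** x)" "\<lambda>_. 1"] assms
  unfolding transplant_def[abs_def] by (simp add: smooth_SO6_perm_matrix smooth_SO6_isotypic)

lemma laplace_eigen_transplant:
  assumes "\<And>S i. S \<in> K \<Longrightarrow> p S (p S i) = i" "\<And>S. S \<in> K \<Longrightarrow> sign (p S) = 1"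
    and "smooth_SO6 f" "laplace_eigen lam f"
  shows "laplace_eigen lam (transplant K p f)"
  using laplace_eigen_sum[of K "\<lambda>S x. isotypic S f (perm_matrix (p S) ** x)" lam "\<lambda>_. 1"] assms
  unfolding transplant_def[abs_def]
  by (simp add: smooth_SO6_perm_matrix smooth_SO6_isotypic laplace_eigen_left_mult
      laplace_eigen_isotypic perm_matrix_SO6)

lemma transplant_inverse:
  assumes inv: "\<And>S i. S \<in> K \<Longrightarrow> p S (p S i) = i"
    and bij: "bij_betw (\<lambda>S. p S -` S) K K'" and p': "\<And>S. S \<in> K \<Longrightarrow> p' (p S -` S) = p S"
    and dist: "distinct_characters K'"
    and decomp: "\<And>x. (\<Sum>S\<in>K. isotypic S f x) = f x"
  shows "transplant K' p' (transplant K p f) = f"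
proof
  fix x
  let ?u = "\<lambda>S y. isotypic S f (perm_matrix (p S) ** y)"
  have char: "has_character (p S -` S) (?u S)" if "S \<in> K" for S
    by (rule has_character_perm_matrix[OF has_character_isotypic inv[OF that]])
  have pick: "isotypic (p S -` S) (?u S') y = (if S' = S then ?u S y else 0)" if "S \<in> K" "S' \<in> K" for S S' y
  proof (cases "S' = S")
    case False
    then have "p S -` S \<noteq> p S' -` S'"
      using inj_on_eq_iff[OF bij_betw_imp_inj_on[OF bij] that] by simp
    moreover have "p S -` S \<in> K'" "p S' -` S' \<in> K'" using bij that by (auto dest: bij_betw_apply)
    ultimately have "sym_diff (p S -` S) (p S' -` S') \<notin> {{}, UNIV}"
      using dist unfolding distinct_characters_def by blast
    then show ?thesis using isotypic_other[OF char[OF that(2)]] False by simp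
  qed (simp add: isotypic_self[OF char[OF that(1)]])
  have "transplant K' p' (transplant K p f) x
      = (\<Sum>S\<in>K. isotypic (p S -` S) (transplant K p f) (perm_matrix (p S) ** x))"
    unfolding transplant_def[of K'] using p' by (simp add: sum.reindex_bij_betw[OF bij, symmetric])
  also have "\<dots> = (\<Sum>S\<in>K. ?u S (perm_matrix (p S) ** x))"
    unfolding transplant_def[abs_def] isotypic_sum using pick by (simp add: sum.delta'[OF finite] cong: sum.cong)
  also have "\<dots> = (\<Sum>S\<in>K. isotypic S f x)"
    using inv by (simp add: matrix_mul_assoc perm_matrix_mult_self)
  finally show "transplant K' p' (transplant K p f) x = f x" using decomp by simp
qed

section \<open>Isospectrality\<close>

lemma mem_eigenspace_orb_iff:
  assumes "\<Gamma> \<subseteq> SO6" "mat 1 \<in> \<Gamma>"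
  shows "f \<in> eigenspace_orb \<Gamma> lam \<longleftrightarrow> smooth_SO6 f \<and> laplace_eigen lam f \<and>
     (\<forall>a\<in>\<Gamma>. \<forall>x. f (a ** x) = f x) \<and> (\<forall>b\<in>Gamma1. \<forall>x. f (x ** b) = f x)"
proof
  assume f: "f \<in> eigenspace_orb \<Gamma> lam"
  then have s: "smooth_SO6 f" and inv: "invariant \<Gamma> f"
    unfolding eigenspace_orb_def by auto
  have "f (a ** x) = f x" if a: "a \<in> \<Gamma>" for a x
  proof (cases "x \<in> SO6")
    case True
    then show ?thesis using inv a mat1_Gamma1 unfolding invariant_def by (metis matrix_mul_rid)
  next
    case False
    then show ?thesis using a assms(1) smooth_SO6_vanishes[OF s] SO6_mult_left_iff[of a x] by auto
  qed
  moreover have "f (x ** b) = f x" if b: "b \<in> Gamma1" for b x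
  proof (cases "x \<in> SO6")
    case True
    then show ?thesis using inv b assms(2) unfolding invariant_def by (metis matrix_mul_lid)
  next
    case False
    then show ?thesis using b Gamma1_SO6 smooth_SO6_vanishes[OF s] SO6_mult_right_iff[of b x] by auto
  qed
  ultimately show "smooth_SO6 f \<and> laplace_eigen lam f \<and>
     (\<forall>a\<in>\<Gamma>. \<forall>x. f (a ** x) = f x) \<and> (\<forall>b\<in>Gamma1. \<forall>x. f (x ** b) = f x)"
    using f s unfolding eigenspace_orb_def laplace_eigen_def by auto
qed (auto simp: eigenspace_orb_def laplace_eigen_def invariant_def)

lemma transplant_mem_eigenspace_orb:
  assumes K: "K' = (\<lambda>S. p S -` S) ` K"
    and p: "\<And>S i. S \<in> K \<Longrightarrow> p S (p S i) = i" "\<And>S. S \<in> K \<Longrightarrow> sign (p S) = 1"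
    and f: "f \<in> eigenspace_orb (sign_diag ` char_kernel K) lam"
  shows "transplant K p f \<in> eigenspace_orb (sign_diag ` char_kernel K') lam"
proof -
  have "smooth_SO6 f" "laplace_eigen lam f" "\<forall>b\<in>Gamma1. \<forall>x. f (x ** b) = f x"
    using f mem_eigenspace_orb_iff[OF sign_diag_char_kernel_SO6 mat1_sign_diag_char_kernel] by auto
  then show ?thesis
    unfolding mem_eigenspace_orb_iff[OF sign_diag_char_kernel_SO6 mat1_sign_diag_char_kernel]
    using p K by (auto simp: smooth_SO6_transplant laplace_eigen_transplant transplant_right_mult
        transplant_left_sign_diag)
qed

text \<open>\<open>swap_14_25\<close> carries the character \<open>{4,5}\<close> of \<open>Gamma1_chars\<close> to \<open>{1,2}\<close> and
  \<open>swap_12_36\<close> carries \<open>{4,6}\<close> to \<open>{3,4}\<close>; this matches \<open>Gamma1_chars\<close> with \<open>Gamma2_chars\<close>.\<close>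

definition transplant_perm :: "6 set \<Rightarrow> 6 \<Rightarrow> 6" where
  "transplant_perm S =
     (if S \<in> {{4,5}, {1,2}} then swap_14_25 else if S \<in> {{4,6}, {3,4}} then swap_12_36 else id)"

lemma transplant_perm_involution: "transplant_perm S (transplant_perm S i) = i"
  by (simp add: transplant_perm_def swap_14_25_involution swap_12_36_involution)

lemma sign_transplant_perm: "sign (transplant_perm S) = 1"
  by (simp add: transplant_perm_def sign_swap_14_25 sign_swap_12_36 sign_id)

lemma transplant_perm_table:
  "transplant_perm {} = id" "transplant_perm {5,6} = id"
  "transplant_perm {4,5} = swap_14_25" "transplant_perm {1,2} = swap_14_25"
  "transplant_perm {4,6} = swap_12_36" "transplant_perm {3,4} = swap_12_36"
  by (simp_all add: transplant_perm_def doubleton_eq_iff)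

lemma swap_vimage_table:
  "swap_14_25 -` {4,5} = {1,2}" "swap_14_25 -` {1,2} = {4,5}"
  "swap_12_36 -` {4,6} = {3,4}" "swap_12_36 -` {3,4} = {4,6}"
  by (auto simp: set_eq_num6_iff)

lemma card_Gamma_chars: "card Gamma1_chars = 4" "card Gamma2_chars = 4"
  by (simp_all add: Gamma1_chars_def Gamma2_chars_def doubleton_eq_iff)

lemma transplant_perm_chars:
  "(\<lambda>S. transplant_perm S -` S) ` Gamma1_chars = Gamma2_chars"
  "(\<lambda>S. transplant_perm S -` S) ` Gamma2_chars = Gamma1_chars"
  "S \<in> Gamma1_chars \<union> Gamma2_chars \<Longrightarrow> transplant_perm (transplant_perm S -` S) = transplant_perm S"
  unfolding Gamma1_chars_def Gamma2_chars_def
  by (simp_all only: image_insert image_empty transplant_perm_table swap_vimage_table vimage_id id_apply)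
     (elim UnE insertE; simp only: transplant_perm_table swap_vimage_table vimage_id id_apply empty_iff)

lemma bij_betw_transplant_perm_chars:
  "bij_betw (\<lambda>S. transplant_perm S -` S) Gamma1_chars Gamma2_chars"
  "bij_betw (\<lambda>S. transplant_perm S -` S) Gamma2_chars Gamma1_chars"
  unfolding bij_betw_def using transplant_perm_chars(1,2) card_Gamma_chars
  by (simp_all add: eq_card_imp_inj_on)

lemma distinct_characters_card_le_2:
  assumes "\<And>S. S \<in> K \<Longrightarrow> card S \<le> 2"
  shows "distinct_characters K"
  unfolding distinct_characters_def
proof (intro ballI impI)
  fix S S' assume S: "S \<in> K" "S' \<in> K" "S \<noteq> S'"
  have "card (sym_diff S S') \<le> card (S \<union> S')" by (intro card_mono) auto
  also have "\<dots> \<le> card S + card S'" by (rule card_Un_le)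
  finally have "card (sym_diff S S') < card (UNIV :: 6 set)" using assms[OF S(1)] assms[OF S(2)] by simp
  then have "sym_diff S S' \<noteq> UNIV" by auto
  moreover have "sym_diff S S' \<noteq> {}" using S(3) by blast
  ultimately show "sym_diff S S' \<notin> {{}, UNIV}" by simp
qed

lemma distinct_characters_Gamma_chars:
  "distinct_characters Gamma1_chars" "distinct_characters Gamma2_chars"
  by (auto intro!: distinct_characters_card_le_2 simp: Gamma1_chars_def Gamma2_chars_def)

lemma sum_character_Gamma_chars:
  assumes "A \<in> even_subsets"
  shows "A \<notin> char_kernel Gamma1_chars \<Longrightarrow> (\<Sum>S\<in>Gamma1_chars. character S A) = 0"
    "A \<notin> char_kernel Gamma2_chars \<Longrightarrow> (\<Sum>S\<in>Gamma2_chars. character S A) = 0"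
  using assms unfolding mem_even_subsets_iff mem_char_kernel_Gamma1_iff mem_char_kernel_Gamma2_iff
  by (simp_all add: Gamma1_chars_def Gamma2_chars_def doubleton_eq_iff character_pair)
     (cases "1 \<in> A"; cases "2 \<in> A"; cases "3 \<in> A"; cases "4 \<in> A"; cases "5 \<in> A"; cases "6 \<in> A"; simp)+

lemma sum_isotypic_Gamma1:
  "(\<And>a x. a \<in> Gamma1 \<Longrightarrow> f (a ** x) = f x) \<Longrightarrow> (\<Sum>S\<in>Gamma1_chars. isotypic S f x) = f x"
proof (rule sum_isotypic_eq[OF distinct_characters_Gamma_chars(1)])
  show "{} \<in> Gamma1_chars" by (simp add: Gamma1_chars_def)
qed (auto simp: Gamma1_eq sum_character_Gamma_chars(1))

lemma sum_isotypic_Gamma2: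
  "(\<And>a x. a \<in> Gamma2 \<Longrightarrow> f (a ** x) = f x) \<Longrightarrow> (\<Sum>S\<in>Gamma2_chars. isotypic S f x) = f x"
proof (rule sum_isotypic_eq[OF distinct_characters_Gamma_chars(2)])
  show "{} \<in> Gamma2_chars" by (simp add: Gamma2_chars_def)
qed (auto simp: Gamma2_eq sum_character_Gamma_chars(2))

lemma linear_transplant: "Vector_Spaces.linear (\<lambda>c f x. c * f x) (\<lambda>c f x. c * f x) (transplant K p)"
proof unfold_locales
  show "transplant K p (f + g) = transplant K p f + transplant K p g" for f g
    using transplant_lincomb[of K p 1 f 1 g] by (simp add: plus_fun_def fun_eq_iff)
  show "transplant K p (\<lambda>x. c * f x) = (\<lambda>x. c * transplant K p f x)" for c f
    using transplant_lincomb[of K p c f 0 f] by (simp add: fun_eq_iff)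
qed (auto simp: fun_eq_iff algebra_simps)

lemma transplant_Gamma_inverse:
  "(\<And>a x. a \<in> Gamma1 \<Longrightarrow> f (a ** x) = f x) \<Longrightarrow>
    transplant Gamma2_chars transplant_perm (transplant Gamma1_chars transplant_perm f) = f"
  "(\<And>a x. a \<in> Gamma2 \<Longrightarrow> f (a ** x) = f x) \<Longrightarrow>
    transplant Gamma1_chars transplant_perm (transplant Gamma2_chars transplant_perm f) = f"
  using transplant_perm_chars(3) distinct_characters_Gamma_chars sum_isotypic_Gamma1 sum_isotypic_Gamma2
  by (auto intro!: transplant_inverse[OF transplant_perm_involution] bij_betw_transplant_perm_chars)

lemma transplant_Gamma_eigenspace:
  "f \<in> eigenspace_orb Gamma1 lam \<Longrightarrow> transplant Gamma1_chars transplant_perm f \<in> eigenspace_orb Gamma2 lam"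
  "f \<in> eigenspace_orb Gamma2 lam \<Longrightarrow> transplant Gamma2_chars transplant_perm f \<in> eigenspace_orb Gamma1 lam"
  using transplant_mem_eigenspace_orb[OF transplant_perm_chars(1)[symmetric]]
    transplant_mem_eigenspace_orb[OF transplant_perm_chars(2)[symmetric]]
  by (auto simp: Gamma1_eq Gamma2_eq transplant_perm_involution sign_transplant_perm)

lemma (in vector_space) dim_image_inj:
  assumes lf: "Vector_Spaces.linear scale scale f" and fi: "inj_on f (span S)"
  shows "dim (f ` S) = dim S"
proof -
  interpret lf: Vector_Spaces.linear scale scale f by (rule lf)
  obtain B where B: "B \<subseteq> S" "independent B" "S \<subseteq> span B" "card B = dim S" by (rule basis_exists)
  have "span B = span S"
    using B(1,3) span_mono[OF B(1)] span_mono[OF B(3)] span_span[of B] by auto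
  then have "independent (f ` B)"
    using lf.dependent_inj_imageD[of B] B(2) fi by auto
  moreover have "card (f ` B) = card B"
    using card_image inj_on_subset[OF fi] B(1) span_superset[of S] by (metis subset_trans)
  ultimately show ?thesis
    using B lf.span_image[of B] by (intro dim_unique[of "f ` B"]) auto
qed

lemma (in vector_space) dim_eq_of_inverse:
  assumes "Vector_Spaces.linear scale scale f" "f ` S \<subseteq> S'" "g ` S' \<subseteq> S"
    and "\<And>x. x \<in> span S \<Longrightarrow> g (f x) = x" "\<And>y. y \<in> S' \<Longrightarrow> f (g y) = y"
  shows "dim S = dim S'"
proof -
  have "inj_on f (span S)" by (rule inj_on_inverseI[of _ g]) (use assms(4) in blast)
  have "S' \<subseteq> f ` S"
  proof
    fix y assume "y \<in> S'"
    then have "g y \<in> S" "f (g y) = y" using assms(3,5) by auto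
    then show "y \<in> f ` S" by (metis image_eqI)
  qed
  then have "f ` S = S'" using assms(2) by blast
  with dim_image_inj[OF assms(1) \<open>inj_on f (span S)\<close>] show ?thesis by simp
qed

theorem isospectral_Gamma1_Gamma2: "isospectral Gamma1 Gamma2"
  unfolding isospectral_def multiplicity_def
proof
  fix lam
  interpret V: vector_space "\<lambda>c (f::mat6 \<Rightarrow> real) x. c * f x"
    by unfold_locales (auto simp: fun_eq_iff algebra_simps)
  have "V.subspace {f. \<forall>a\<in>Gamma1. \<forall>x. f (a ** x) = f x}"
    unfolding V.subspace_def by auto
  moreover have "eigenspace_orb Gamma1 lam \<subseteq> {f. \<forall>a\<in>Gamma1. \<forall>x. f (a ** x) = f x}"
    using mem_eigenspace_orb_iff[OF Gamma1_SO6 mat1_Gamma1] by auto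
  ultimately have span: "V.span (eigenspace_orb Gamma1 lam) \<subseteq> {f. \<forall>a\<in>Gamma1. \<forall>x. f (a ** x) = f x}"
    by (rule V.span_minimal[rotated])
  show "V.dim (eigenspace_orb Gamma1 lam) = V.dim (eigenspace_orb Gamma2 lam)"
  proof (rule V.dim_eq_of_inverse[OF linear_transplant])
    show "f \<in> V.span (eigenspace_orb Gamma1 lam) \<Longrightarrow>
        transplant Gamma2_chars transplant_perm (transplant Gamma1_chars transplant_perm f) = f" for f
      using subsetD[OF span] by (intro transplant_Gamma_inverse(1)) auto
    show "f \<in> eigenspace_orb Gamma2 lam \<Longrightarrow>
        transplant Gamma1_chars transplant_perm (transplant Gamma2_chars transplant_perm f) = f" for f
      using mem_eigenspace_orb_iff[OF Gamma2_SO6 mat1_Gamma2] by (intro transplant_Gamma_inverse(2)) auto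
  qed (use transplant_Gamma_eigenspace in blast)+
qed

theorem mainTheorem5:
  shows "isospectral Gamma1 Gamma2 \<and> max_isotropy Gamma1 = 4 \<and> max_isotropy Gamma2 = 2"
  using isospectral_Gamma1_Gamma2 max_isotropy_Gamma1 max_isotropy_Gamma2 by blast

end
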